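(* Let $n\ge4$ be even and let $K$ be an algebraically closed field of characteristic $2$. Then the algebra $P^*(\mathbb D_n)$ over $K$ is not symmetric.
   Context: Paths in a quiver are composed from left to right: for arrows $\alpha: i\to j$ and $\beta: j\to k$, $\alpha\beta$ is the path $i\to j\to k$. The quiver $Q_{\mathbb D_n}$ has vertices $0,\dots,n-1$ and arrows $a_0:0\to2$, $\bar a_0:2\to0$, $a_1:1\to2$, $\bar a_1:2\to1$, $a_i:i\to i+1$, $\bar a_i:i+1\to i$ ($2\le i\le n-2$); put $\bar{\bar a}=a$. With $n=2m$, $P^*(\mathbb D_n)=KQ_{\mathbb D_n}/I^*$, where $I^*$ is generated by $\sum_{a\text{ starting at }v}a\bar a$ for all vertices $v\neq2$, together with $\bar a_0a_0+\bar a_1a_1+a_2\bar a_2+(\bar a_0a_0\bar a_1a_1)^{m-1}$ and $(\bar a_0a_0+\bar a_1a_1)^{n-2}$. A finite-dimensional algebra $A$ is symmetric if there is a linear form $\psi:A\to K$ with $\psi(ab)=\psi(ba)$ for all $a,b$ whose kernel contains no nonzero one-sided ideal. *)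

theory Defs
  imports "HOL-Computational_Algebra.Polynomial"
begin

text \<open>Vertices 0..n-1. Between any ordered pair of vertices there is at most one arrow,
  so an arrow is identified with the pair (source, target). Arrows:
  a0: 0->2, abar0: 2->0, a1: 1->2, abar1: 2->1, a_i: i->i+1, abar_i: i+1->i (2 <= i <= n-2).\<close>

definition dn_edge :: "nat \<Rightarrow> nat \<Rightarrow> nat \<Rightarrow> bool" where
  "dn_edge n u v \<longleftrightarrow> (u = 0 \<and> v = 2) \<or> (u = 1 \<and> v = 2) \<or> (2 \<le> u \<and> u \<le> n - 2 \<and> v = u + 1)"

definition dn_arrow :: "nat \<Rightarrow> nat \<Rightarrow> nat \<Rightarrow> bool" where
  "dn_arrow n u v \<longleftrightarrow> u < n \<and> v < n \<and> (dn_edge n u v \<or> dn_edge n v u)"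

text \<open>A path (composed left to right) is the nonempty list of vertices it visits;
  the trivial path at v is [v].\<close>

definition dn_path :: "nat \<Rightarrow> nat list \<Rightarrow> bool" where
  "dn_path n p \<longleftrightarrow> p \<noteq> [] \<and> (\<forall>v\<in>set p. v < n) \<and> successively (dn_arrow n) p"

definition KQ :: "nat \<Rightarrow> (nat list \<Rightarrow> 'a::field) set" where
  "KQ n = {f. finite {p. f p \<noteq> 0} \<and> (\<forall>p. f p \<noteq> 0 \<longrightarrow> dn_path n p)}"

definition pzero :: "nat list \<Rightarrow> 'a::field" where
  "pzero = (\<lambda>_. 0)"

definition padd :: "(nat list \<Rightarrow> 'a::field) \<Rightarrow> (nat list \<Rightarrow> 'a) \<Rightarrow> nat list \<Rightarrow> 'a" where
  "padd f g = (\<lambda>p. f p + g p)"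

definition psmult :: "'a::field \<Rightarrow> (nat list \<Rightarrow> 'a) \<Rightarrow> nat list \<Rightarrow> 'a" where
  "psmult c f = (\<lambda>p. c * f p)"

definition pmult :: "(nat list \<Rightarrow> 'a::field) \<Rightarrow> (nat list \<Rightarrow> 'a) \<Rightarrow> nat list \<Rightarrow> 'a" where
  "pmult f g = (\<lambda>w. \<Sum>(p, q) \<in> {(p, q). f p \<noteq> 0 \<and> g q \<noteq> 0 \<and> p \<noteq> [] \<and> q \<noteq> [] \<and>
                                      last p = hd q \<and> p @ tl q = w}. f p * g q)"

definition pone :: "nat \<Rightarrow> nat list \<Rightarrow> 'a::field" where
  "pone n = (\<lambda>p. if \<exists>v<n. p = [v] then 1 else 0)"

definition pbasis :: "nat list \<Rightarrow> nat list \<Rightarrow> 'a::field" where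
  "pbasis p = (\<lambda>q. if q = p then 1 else 0)"

fun ppow :: "nat \<Rightarrow> (nat list \<Rightarrow> 'a::field) \<Rightarrow> nat \<Rightarrow> nat list \<Rightarrow> 'a" where
  "ppow n f 0 = pone n"
| "ppow n f (Suc k) = pmult (ppow n f k) f"

definition is_subspace :: "nat \<Rightarrow> (nat list \<Rightarrow> 'a::field) set \<Rightarrow> bool" where
  "is_subspace n J \<longleftrightarrow> J \<subseteq> KQ n \<and> pzero \<in> J \<and>
     (\<forall>f\<in>J. \<forall>g\<in>J. padd f g \<in> J) \<and> (\<forall>c. \<forall>f\<in>J. psmult c f \<in> J)"

definition is_left_ideal :: "nat \<Rightarrow> (nat list \<Rightarrow> 'a::field) set \<Rightarrow> bool" where
  "is_left_ideal n J \<longleftrightarrow> is_subspace n J \<and> (\<forall>a\<in>KQ n. \<forall>f\<in>J. pmult a f \<in> J)"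

definition is_right_ideal :: "nat \<Rightarrow> (nat list \<Rightarrow> 'a::field) set \<Rightarrow> bool" where
  "is_right_ideal n J \<longleftrightarrow> is_subspace n J \<and> (\<forall>a\<in>KQ n. \<forall>f\<in>J. pmult f a \<in> J)"

definition is_ideal :: "nat \<Rightarrow> (nat list \<Rightarrow> 'a::field) set \<Rightarrow> bool" where
  "is_ideal n J \<longleftrightarrow> is_left_ideal n J \<and> is_right_ideal n J"

definition gen_ideal :: "nat \<Rightarrow> (nat list \<Rightarrow> 'a::field) set \<Rightarrow> (nat list \<Rightarrow> 'a) set" where
  "gen_ideal n R = \<Inter>{J. is_ideal n J \<and> R \<subseteq> J}"

text \<open>For a vertex v: sum over arrows a starting at v of a abar, i.e. sum over
  neighbours w of the path v -> w -> v.\<close>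

definition vertex_rel :: "nat \<Rightarrow> nat \<Rightarrow> nat list \<Rightarrow> 'a::field" where
  "vertex_rel n v = (\<lambda>p. if \<exists>w. dn_arrow n v w \<and> p = [v, w, v] then 1 else 0)"

definition Istar_gens :: "nat \<Rightarrow> (nat list \<Rightarrow> 'a::field) set" where
  "Istar_gens n =
     {vertex_rel n v | v. v < n \<and> v \<noteq> 2}
   \<union> {padd (vertex_rel n 2)
        (ppow n (pmult (pmult (pbasis [2,0]) (pbasis [0,2])) (pmult (pbasis [2,1]) (pbasis [1,2])))
           (n div 2 - 1))}
   \<union> {ppow n (padd (pmult (pbasis [2,0]) (pbasis [0,2])) (pmult (pbasis [2,1]) (pbasis [1,2]))) (n - 2)}"

definition Istar :: "nat \<Rightarrow> (nat list \<Rightarrow> 'a::field) set" where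
  "Istar n = gen_ideal n (Istar_gens n)"

text \<open>A linear form on KQ/I is a linear form on KQ vanishing on I. One-sided ideals of KQ/I
  correspond to one-sided ideals J of KQ containing I; such an ideal is nonzero iff J is not
  contained in I.\<close>

definition symmetric_quotient :: "nat \<Rightarrow> (nat list \<Rightarrow> 'a::field) set \<Rightarrow> bool" where
  "symmetric_quotient n I \<longleftrightarrow>
    (\<exists>\<psi> :: (nat list \<Rightarrow> 'a) \<Rightarrow> 'a.
       (\<forall>f\<in>KQ n. \<forall>g\<in>KQ n. \<psi> (padd f g) = \<psi> f + \<psi> g) \<and>
       (\<forall>c. \<forall>f\<in>KQ n. \<psi> (psmult c f) = c * \<psi> f) \<and>
       (\<forall>f\<in>I. \<psi> f = 0) \<and>
       (\<forall>a\<in>KQ n. \<forall>b\<in>KQ n. \<psi> (pmult a b) = \<psi> (pmult b a)) \<and>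
       (\<forall>J. (is_left_ideal n J \<or> is_right_ideal n J) \<and> I \<subseteq> J \<and> (\<forall>f\<in>J. \<psi> f = 0)
              \<longrightarrow> J \<subseteq> I))"

end

theory Submission
  imports Defs
begin

text \<open>Let \<open>p\<close> be the socle path \<open>0 2 1 2 0 2 1 2 \<dots> 0\<close> of length \<open>2n - 4\<close>. It does not lie in \<open>I^*\<close>:
  in characteristic 2 every mesh relation acts as zero on a string-like representation, built on the
  positions of \<open>p\<close> and on excursions up the long arm, on which \<open>p\<close> acts nontrivially. Since \<open>p\<close>
  followed by the arrow \<open>0 2\<close> lies in \<open>I^*\<close>, the space \<open>I^* + K p\<close> is a right ideal. Finally every
  trace form vanishing on \<open>I^*\<close> kills \<open>p\<close>: rotations conjugate \<open>p\<close> to \<open>(2 0 2 1 2)^{n/2-1}\<close>, which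
  \<open>I^*\<close> relates to the mesh relation at 2, whose cycles rotate into the relations at 0, 1 and, by
  descent along the arm, at 3. A symmetrizing form would thus vanish on a right ideal strictly
  larger than \<open>I^*\<close>.\<close>

section \<open>The path algebra\<close>

definition psupp :: "(nat list \<Rightarrow> 'a::field) \<Rightarrow> nat list set" where
  "psupp f = {p. f p \<noteq> 0}"

definition pind :: "nat list set \<Rightarrow> nat list \<Rightarrow> 'a::field" where
  "pind S = (\<lambda>p. if p \<in> S then 1 else 0)"

definition composable :: "nat list \<Rightarrow> nat list \<Rightarrow> bool" where
  "composable p q \<longleftrightarrow> p \<noteq> [] \<and> q \<noteq> [] \<and> last p = hd q"

lemma pmult_eq_sum:
  fixes f g :: "nat list \<Rightarrow> 'a::field"
  assumes "finite U" "finite V" "psupp f \<subseteq> U" "psupp g \<subseteq> V"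
  shows "pmult f g w = (\<Sum>p\<in>U. \<Sum>q\<in>V. if composable p q \<and> p @ tl q = w then f p * g q else 0)"
proof -
  let ?P = "{(p, q). f p \<noteq> 0 \<and> g q \<noteq> 0 \<and> p \<noteq> [] \<and> q \<noteq> [] \<and> last p = hd q \<and> p @ tl q = w}"
  let ?T = "{pq \<in> U \<times> V. composable (fst pq) (snd pq) \<and> fst pq @ tl (snd pq) = w}"
  have "pmult f g w = (\<Sum>(p,q)\<in>?P. f p * g q)" by (simp add: pmult_def)
  also have "\<dots> = (\<Sum>(p,q)\<in>?T. f p * g q)"
    using assms by (intro sum.mono_neutral_left) (auto simp: psupp_def composable_def)
  also have "\<dots> = (\<Sum>pq\<in>U \<times> V. if composable (fst pq) (snd pq) \<and> fst pq @ tl (snd pq) = w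
                                 then f (fst pq) * g (snd pq) else 0)"
    unfolding case_prod_beta using assms by (intro sum.inter_filter) auto
  also have "\<dots> = (\<Sum>p\<in>U. \<Sum>q\<in>V. if composable p q \<and> p @ tl q = w then f p * g q else 0)"
    by (simp add: sum.cartesian_product case_prod_beta)
  finally show ?thesis .
qed

lemma pmult_nonzeroE:
  assumes "pmult f g w \<noteq> 0"
  obtains p q where "f p \<noteq> 0" "g q \<noteq> 0" "composable p q" "w = p @ tl q"
proof (rule ccontr)
  assume "\<not> thesis"
  hence "{(p, q). f p \<noteq> 0 \<and> g q \<noteq> 0 \<and> p \<noteq> [] \<and> q \<noteq> [] \<and> last p = hd q \<and> p @ tl q = w} = {}"
    using that by (auto simp: composable_def)
  thus False using assms unfolding pmult_def by (metis (no_types, lifting) sum.empty)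
qed

lemma psupp_pmult_subset: "psupp (pmult f g) \<subseteq> (\<lambda>(p, q). p @ tl q) ` (psupp f \<times> psupp g)"
  by (auto simp: psupp_def elim!: pmult_nonzeroE)

lemma psupp_padd_subset: "psupp (padd f g) \<subseteq> psupp f \<union> psupp g"
  by (auto simp: psupp_def padd_def)

lemma psupp_psmult_subset: "psupp (psmult c f) \<subseteq> psupp f"
  by (auto simp: psupp_def psmult_def)

lemma padd_commute: "padd f g = padd g f"
  by (simp add: padd_def add.commute)

lemma finite_psupp_pmult: "finite (psupp f) \<Longrightarrow> finite (psupp g) \<Longrightarrow> finite (psupp (pmult f g))"
  by (rule finite_subset[OF psupp_pmult_subset]) auto

lemma finite_psupp_padd: "finite (psupp f) \<Longrightarrow> finite (psupp g) \<Longrightarrow> finite (psupp (padd f g))"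
  by (meson finite_Un finite_subset psupp_padd_subset)

lemma finite_psupp_pbasis: "finite (psupp (pbasis p))"
  by (rule finite_subset[of _ "{p}"]) (auto simp: psupp_def pbasis_def)

lemma KQ_iff: "f \<in> KQ n \<longleftrightarrow> finite (psupp f) \<and> (\<forall>p\<in>psupp f. dn_path n p)"
  by (auto simp: KQ_def psupp_def)

lemma finite_psupp_KQ: "f \<in> KQ n \<Longrightarrow> finite (psupp f)"
  by (simp add: KQ_iff)

lemma dn_path_append_tl:
  assumes "dn_path n p" "dn_path n q" "last p = hd q"
  shows "dn_path n (p @ tl q)"
proof -
  from assms(2) obtain v r where q: "q = v # r" unfolding dn_path_def by (cases q) auto
  have "successively (dn_arrow n) (p @ r)"
  proof (cases r)
    case Nil thus ?thesis using assms(1) by (simp add: dn_path_def)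
  next
    case (Cons w r')
    have "successively (dn_arrow n) (v # w # r')" using assms(2) q Cons by (simp add: dn_path_def)
    thus ?thesis using assms(1,3) q Cons by (auto simp: dn_path_def successively_append_iff)
  qed
  thus ?thesis using assms q by (auto simp: dn_path_def)
qed

lemma dn_path_appendD:
  assumes "dn_path n (xs @ ys)"
  shows "xs \<noteq> [] \<Longrightarrow> dn_path n xs" and "ys \<noteq> [] \<Longrightarrow> dn_path n ys"
  using assms by (auto simp: dn_path_def successively_append_iff)

lemma KQ_pzero: "pzero \<in> KQ n"
  by (simp add: KQ_def pzero_def)

lemma KQ_padd: "f \<in> KQ n \<Longrightarrow> g \<in> KQ n \<Longrightarrow> padd f g \<in> KQ n"
  using psupp_padd_subset[of f g] by (auto simp: KQ_iff intro: finite_subset)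

lemma KQ_psmult: "f \<in> KQ n \<Longrightarrow> psmult c f \<in> KQ n"
  using psupp_psmult_subset[of c f] by (auto simp: KQ_iff intro: finite_subset)

lemma KQ_pmult:
  assumes "f \<in> KQ n" "g \<in> KQ n"
  shows "pmult f g \<in> KQ n"
  unfolding KQ_iff
proof
  show "finite (psupp (pmult f g))" using assms by (simp add: KQ_iff finite_psupp_pmult)
  show "\<forall>w\<in>psupp (pmult f g). dn_path n w"
    using assms by (auto simp: psupp_def KQ_def composable_def intro: dn_path_append_tl
        elim!: pmult_nonzeroE)
qed

lemma KQ_pind: "finite S \<Longrightarrow> (\<And>p. p \<in> S \<Longrightarrow> dn_path n p) \<Longrightarrow> pind S \<in> KQ n"
  by (auto simp: KQ_def pind_def)

lemma pbasis_eq_pind: "pbasis p = pind {p}"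
  by (simp add: pbasis_def pind_def fun_eq_iff)

lemma KQ_pbasis: "dn_path n p \<Longrightarrow> pbasis p \<in> KQ n"
  unfolding pbasis_eq_pind by (rule KQ_pind) auto

lemma pone_eq_pind: "pone n = pind ((\<lambda>v. [v]) ` {..<n})"
  by (auto simp: pone_def pind_def fun_eq_iff)

lemma KQ_pone: "pone n \<in> KQ n"
  unfolding pone_eq_pind by (rule KQ_pind) (auto simp: dn_path_def)

lemma KQ_ppow: "f \<in> KQ n \<Longrightarrow> ppow n f k \<in> KQ n"
  by (induction k) (auto simp: KQ_pone KQ_pmult)

lemma pmult_padd_left:
  assumes "finite (psupp f)" "finite (psupp g)" "finite (psupp a)"
  shows "pmult (padd f g) a = padd (pmult f a) (pmult g a)"
proof
  fix w
  have U: "finite (psupp f \<union> psupp g)" using assms by simp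
  show "pmult (padd f g) a w = padd (pmult f a) (pmult g a) w"
    unfolding padd_def
    using psupp_padd_subset[of f g]
    by (subst (1 2 3) pmult_eq_sum[OF U assms(3) _ order_refl])
      (auto simp: padd_def sum.distrib[symmetric] distrib_right intro!: sum.cong)
qed

lemma pmult_psmult_left:
  assumes "finite (psupp f)" "finite (psupp a)"
  shows "pmult (psmult c f) a = psmult c (pmult f a)"
proof
  fix w
  show "pmult (psmult c f) a w = psmult c (pmult f a) w"
    unfolding psmult_def using psupp_psmult_subset[of c f]
    by (subst (1 2) pmult_eq_sum[OF assms _ order_refl])
      (auto simp: psmult_def sum_distrib_left mult.assoc intro!: sum.cong)
qed

lemma pmult_pind:
  assumes "\<forall>p\<in>S. p \<noteq> []" "\<forall>q\<in>T. q \<noteq> []"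
    and inj: "inj_on (\<lambda>(p, q). p @ tl q) {(p, q). p \<in> S \<and> q \<in> T \<and> last p = hd q}"
  shows "pmult (pind S) (pind T) =
    (pind ((\<lambda>(p, q). p @ tl q) ` {(p, q). p \<in> S \<and> q \<in> T \<and> last p = hd q}) :: nat list \<Rightarrow> 'a::field)"
proof
  fix w
  let ?D = "{(p, q). p \<in> S \<and> q \<in> T \<and> last p = hd q}"
  let ?c = "\<lambda>(p :: nat list, q :: nat list). p @ tl q"
  have P: "{(p, q). (pind S p :: 'a) \<noteq> 0 \<and> (pind T q :: 'a) \<noteq> 0 \<and> p \<noteq> [] \<and> q \<noteq> [] \<and>
                    last p = hd q \<and> p @ tl q = w} = {x \<in> ?D. ?c x = w}"
    using assms(1,2) by (auto simp: pind_def)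
  show "pmult (pind S) (pind T) w = (pind (?c ` ?D) :: nat list \<Rightarrow> 'a) w"
  proof (cases "w \<in> ?c ` ?D")
    case True
    then obtain x where x: "x \<in> ?D" "?c x = w" by blast
    with inj have "{x \<in> ?D. ?c x = w} = {x}" by (auto simp: inj_on_def)
    thus ?thesis using x True unfolding pmult_def P by (auto simp: pind_def case_prod_beta)
  next
    case False
    hence E: "{x \<in> ?D. ?c x = w} = {}" by auto
    show ?thesis using False unfolding pmult_def P E by (simp add: pind_def)
  qed
qed

lemma pmult_pbasis:
  assumes "composable p q"
  shows "pmult (pbasis p) (pbasis q) = pbasis (p @ tl q)"
proof -
  have "{(p', q'). p' \<in> {p} \<and> q' \<in> {q} \<and> last p' = hd q'} = {(p, q)}"
    using assms by (auto simp: composable_def)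
  thus ?thesis unfolding pbasis_eq_pind using assms
    by (subst pmult_pind) (auto simp: inj_on_def composable_def)
qed

lemma pmult_pone_left:
  assumes "\<forall>q\<in>T. q \<noteq> [] \<and> hd q < n"
  shows "pmult (pone n) (pind T) = pind T"
proof -
  let ?D = "{(p, q). p \<in> (\<lambda>v. [v]) ` {..<n} \<and> q \<in> T \<and> last p = hd q}"
  have "(\<lambda>(p, q). p @ tl q) ` ?D = T"
  proof (intro set_eqI iffI)
    fix q assume "q \<in> T"
    with assms have "([hd q], q) \<in> ?D" "q = [hd q] @ tl q" by auto
    thus "q \<in> (\<lambda>(p, q). p @ tl q) ` ?D" by (auto intro!: image_eqI[of _ _ "([hd q], q)"])
  next
    fix w assume "w \<in> (\<lambda>(p, q). p @ tl q) ` ?D"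
    thus "w \<in> T" using assms by (auto simp: list.collapse)
  qed
  moreover have "inj_on (\<lambda>(p, q). p @ tl q) ?D"
    using assms by (auto simp: inj_on_def)
  ultimately show ?thesis unfolding pone_eq_pind using assms by (subst pmult_pind) auto
qed

lemma pmult_pbasis_pind_Cons:
  assumes "\<forall>w\<in>S. w \<noteq> [] \<and> hd w = v"
  shows "pmult (pbasis [u, v]) (pind S) = (pind (Cons u ` S) :: nat list \<Rightarrow> 'a::field)"
proof -
  let ?D = "{(p, q). p \<in> {[u, v]} \<and> q \<in> S \<and> last p = hd q}"
  have tl: "w = v # tl w" if "w \<in> S" for w using assms that by (metis list.collapse)
  have "(\<lambda>(p, q). p @ tl q) ` ?D = Cons u ` S"
  proof (intro set_eqI iffI)
    fix x assume "x \<in> (\<lambda>(p, q). p @ tl q) ` ?D"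
    then obtain q where "q \<in> S" "x = [u, v] @ tl q" by auto
    thus "x \<in> Cons u ` S" using tl by force
  next
    fix x assume "x \<in> Cons u ` S"
    then obtain q where "q \<in> S" "x = [u, v] @ tl q" using tl by force
    thus "x \<in> (\<lambda>(p, q). p @ tl q) ` ?D" using assms by (auto intro!: image_eqI[of _ _ "([u, v], q)"])
  qed
  moreover have "inj_on (\<lambda>(p, q). p @ tl q) ?D"
    by (rule inj_onI) (clarsimp, metis tl)
  ultimately show ?thesis unfolding pbasis_eq_pind using assms by (subst pmult_pind) auto
qed

lemma is_ideal_KQ: "is_ideal n (KQ n)"
  by (auto simp: is_ideal_def is_left_ideal_def is_right_ideal_def is_subspace_def
      KQ_pzero KQ_padd KQ_psmult KQ_pmult)

lemma gen_ideal_least: "is_ideal n J \<Longrightarrow> R \<subseteq> J \<Longrightarrow> gen_ideal n R \<subseteq> J"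
  by (auto simp: gen_ideal_def)

lemma gen_ideal_generator: "g \<in> R \<Longrightarrow> g \<in> gen_ideal n R"
  by (auto simp: gen_ideal_def)

lemma is_ideal_gen_ideal:
  assumes "R \<subseteq> KQ n"
  shows "is_ideal n (gen_ideal n R)"
proof -
  let ?\<J> = "{J. is_ideal n J \<and> R \<subseteq> J}"
  have closed: "x \<in> gen_ideal n R" if "\<And>J. J \<in> ?\<J> \<Longrightarrow> x \<in> J" for x
    using that by (simp add: gen_ideal_def)
  have "gen_ideal n R \<subseteq> KQ n" by (rule gen_ideal_least[OF is_ideal_KQ assms])
  moreover have "pzero \<in> gen_ideal n R"
    by (intro closed) (simp add: is_ideal_def is_left_ideal_def is_subspace_def)
  moreover have "padd f g \<in> gen_ideal n R" if "f \<in> gen_ideal n R" "g \<in> gen_ideal n R" for f g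
    using that by (intro closed) (auto simp: gen_ideal_def is_ideal_def is_left_ideal_def is_subspace_def)
  moreover have "psmult c f \<in> gen_ideal n R" if "f \<in> gen_ideal n R" for c f
    using that by (intro closed) (auto simp: gen_ideal_def is_ideal_def is_left_ideal_def is_subspace_def)
  moreover have "pmult a f \<in> gen_ideal n R" if "a \<in> KQ n" "f \<in> gen_ideal n R" for a f
    using that by (intro closed) (auto simp: gen_ideal_def is_ideal_def is_left_ideal_def)
  moreover have "pmult f a \<in> gen_ideal n R" if "a \<in> KQ n" "f \<in> gen_ideal n R" for a f
    using that by (intro closed) (auto simp: gen_ideal_def is_ideal_def is_right_ideal_def)
  ultimately show ?thesis
    by (simp add: is_ideal_def is_left_ideal_def is_right_ideal_def is_subspace_def)
qed

context
  fixes n :: nat and J :: "(nat list \<Rightarrow> 'a::field) set"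
  assumes ideal: "is_ideal n J"
begin

lemma ideal_subset_KQ: "J \<subseteq> KQ n"
  and ideal_pzero: "pzero \<in> J"
  and ideal_padd: "f \<in> J \<Longrightarrow> g \<in> J \<Longrightarrow> padd f g \<in> J"
  and ideal_psmult: "f \<in> J \<Longrightarrow> psmult c f \<in> J"
  and ideal_pmult_left: "a \<in> KQ n \<Longrightarrow> f \<in> J \<Longrightarrow> pmult a f \<in> J"
  and ideal_pmult_right: "a \<in> KQ n \<Longrightarrow> f \<in> J \<Longrightarrow> pmult f a \<in> J"
  using ideal by (auto simp: is_ideal_def is_left_ideal_def is_right_ideal_def is_subspace_def)

lemma ideal_sum:
  assumes "finite Q" "\<And>q. q \<in> Q \<Longrightarrow> F q \<in> J"
  shows "(\<lambda>w. \<Sum>q\<in>Q. c q * F q w) \<in> J"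
  using assms
proof (induction Q rule: finite_induct)
  case empty
  have "(\<lambda>w. \<Sum>q\<in>{}. c q * F q w) = pzero" by (simp add: pzero_def fun_eq_iff)
  thus ?case using ideal_pzero by simp
next
  case (insert q0 Q)
  have "(\<lambda>w. \<Sum>q\<in>insert q0 Q. c q * F q w) = padd (psmult (c q0) (F q0)) (\<lambda>w. \<Sum>q\<in>Q. c q * F q w)"
    using insert.hyps by (simp add: padd_def psmult_def fun_eq_iff)
  thus ?case using insert by (simp add: ideal_padd ideal_psmult)
qed

lemma ideal_pind:
  assumes "finite B" "\<And>b. b \<in> B \<Longrightarrow> pbasis b \<in> J"
  shows "pind B \<in> J"
proof -
  have "(pind B :: nat list \<Rightarrow> 'a) = (\<lambda>w. \<Sum>b\<in>B. 1 * pbasis b w)"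
    using assms(1) by (auto simp: pind_def pbasis_def fun_eq_iff)
  thus ?thesis using ideal_sum[of B pbasis "\<lambda>_. 1"] assms by simp
qed

end

section \<open>A criterion for non-symmetry\<close>

definition trace_form :: "nat \<Rightarrow> (nat list \<Rightarrow> 'a::field) set \<Rightarrow> ((nat list \<Rightarrow> 'a) \<Rightarrow> 'a) \<Rightarrow> bool" where
  "trace_form n I \<psi> \<longleftrightarrow>
     (\<forall>f\<in>KQ n. \<forall>g\<in>KQ n. \<psi> (padd f g) = \<psi> f + \<psi> g) \<and>
     (\<forall>c. \<forall>f\<in>KQ n. \<psi> (psmult c f) = c * \<psi> f) \<and>
     (\<forall>f\<in>I. \<psi> f = 0) \<and>
     (\<forall>a\<in>KQ n. \<forall>b\<in>KQ n. \<psi> (pmult a b) = \<psi> (pmult b a))"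

lemma trace_formD:
  assumes "trace_form n I \<psi>"
  shows "f \<in> KQ n \<Longrightarrow> g \<in> KQ n \<Longrightarrow> \<psi> (padd f g) = \<psi> f + \<psi> g"
    and "f \<in> KQ n \<Longrightarrow> \<psi> (psmult c f) = c * \<psi> f"
    and "f \<in> I \<Longrightarrow> \<psi> f = 0"
    and "a \<in> KQ n \<Longrightarrow> b \<in> KQ n \<Longrightarrow> \<psi> (pmult a b) = \<psi> (pmult b a)"
  using assms by (auto simp: trace_form_def)

lemma is_right_ideal_extend_line:
  fixes I :: "(nat list \<Rightarrow> 'a::field) set"
  assumes I: "is_ideal n I" and s: "s \<in> KQ n"
    and right: "\<And>a. a \<in> KQ n \<Longrightarrow> \<exists>c. (\<lambda>w. pmult s a w - c * s w) \<in> I"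
  shows "is_right_ideal n {f \<in> KQ n. \<exists>c. (\<lambda>w. f w - c * s w) \<in> I}"
    (is "is_right_ideal n ?J")
proof -
  have IK: "I \<subseteq> KQ n" by (rule ideal_subset_KQ[OF I])
  have decomp: "f = padd (\<lambda>w. f w - c * s w) (psmult c s)" for f :: "nat list \<Rightarrow> 'a" and c
    by (simp add: padd_def psmult_def fun_eq_iff)
  have "(\<lambda>w. pzero w - 0 * s w) = pzero" by (simp add: pzero_def)
  hence "pzero \<in> ?J" using ideal_pzero[OF I] KQ_pzero by (auto intro!: exI[of _ 0])
  moreover have "padd f g \<in> ?J" if "f \<in> ?J" "g \<in> ?J" for f g
  proof -
    from that obtain c d where "(\<lambda>w. f w - c * s w) \<in> I" "(\<lambda>w. g w - d * s w) \<in> I" by blast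
    from ideal_padd[OF I this]
    have "(\<lambda>w. padd f g w - (c + d) * s w) \<in> I" by (simp add: padd_def algebra_simps)
    thus ?thesis using that KQ_padd by blast
  qed
  moreover have "psmult e f \<in> ?J" if "f \<in> ?J" for e f
  proof -
    from that obtain c where "(\<lambda>w. f w - c * s w) \<in> I" by blast
    from ideal_psmult[OF I this, of e]
    have "(\<lambda>w. psmult e f w - (e * c) * s w) \<in> I" by (simp add: psmult_def algebra_simps)
    thus ?thesis using that KQ_psmult by blast
  qed
  moreover have "pmult f a \<in> ?J" if a: "a \<in> KQ n" and f: "f \<in> ?J" for a f
  proof -
    from f obtain c where i: "(\<lambda>w. f w - c * s w) \<in> I" (is "?i \<in> I") and fK: "f \<in> KQ n" by blast
    from right[OF a] obtain d where r: "(\<lambda>w. pmult s a w - d * s w) \<in> I" (is "?r \<in> I") by blast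
    have fin: "finite (psupp ?i)" "finite (psupp (psmult c s))" "finite (psupp a)" "finite (psupp s)"
      using i IK s a by (auto intro!: finite_psupp_KQ KQ_psmult)
    have "pmult f a = padd (pmult ?i a) (psmult c (pmult s a))"
      by (subst decomp[of f c]) (simp add: pmult_padd_left[OF fin(1-3)] pmult_psmult_left[OF fin(4,3)])
    hence "(\<lambda>w. pmult f a w - (c * d) * s w) = padd (pmult ?i a) (psmult c ?r)"
      by (simp add: padd_def psmult_def algebra_simps fun_eq_iff)
    also have "\<dots> \<in> I" using I i r a by (simp add: ideal_padd ideal_psmult ideal_pmult_right)
    finally show ?thesis using KQ_pmult[OF fK a] by blast
  qed
  ultimately show ?thesis by (auto simp: is_right_ideal_def is_subspace_def)
qed

lemma not_symmetric_quotientI: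
  fixes I :: "(nat list \<Rightarrow> 'a::field) set"
  assumes I: "is_ideal n I" and s: "s \<in> KQ n" "s \<notin> I"
    and right: "\<And>a. a \<in> KQ n \<Longrightarrow> \<exists>c. (\<lambda>w. pmult s a w - c * s w) \<in> I"
    and trace: "\<And>\<psi>. trace_form n I \<psi> \<Longrightarrow> \<psi> s = 0"
  shows "\<not> symmetric_quotient n I"
proof
  assume "symmetric_quotient n I"
  then obtain \<psi> where \<psi>: "trace_form n I \<psi>"
    and nondeg: "\<forall>J. (is_left_ideal n J \<or> is_right_ideal n J) \<and> I \<subseteq> J \<and> (\<forall>f\<in>J. \<psi> f = 0)
                  \<longrightarrow> J \<subseteq> I"
    unfolding symmetric_quotient_def by (elim exE conjE) (rule that; simp add: trace_form_def)
  have "\<psi> s = 0" by (rule trace[OF \<psi>])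
  define J where "J = {f \<in> KQ n. \<exists>c. (\<lambda>w. f w - c * s w) \<in> I}"
  have "is_right_ideal n J" unfolding J_def by (rule is_right_ideal_extend_line[OF I s(1) right])
  moreover have "I \<subseteq> J" using ideal_subset_KQ[OF I] by (auto simp: J_def intro!: exI[of _ 0])
  moreover have "\<psi> f = 0" if "f \<in> J" for f
  proof -
    from that obtain c where i: "(\<lambda>w. f w - c * s w) \<in> I" by (auto simp: J_def)
    have "\<psi> f = \<psi> (padd (\<lambda>w. f w - c * s w) (psmult c s))"
      by (simp add: padd_def psmult_def)
    also have "\<dots> = \<psi> (\<lambda>w. f w - c * s w) + c * \<psi> s"
      using i ideal_subset_KQ[OF I] s(1)
      by (auto simp: trace_formD(1,2)[OF \<psi>] KQ_psmult)
    finally show ?thesis using \<open>\<psi> s = 0\<close> i by (simp add: trace_formD(3)[OF \<psi>])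
  qed
  ultimately have "J \<subseteq> I" using nondeg by blast
  moreover have "s \<in> J"
  proof -
    have "(\<lambda>w. s w - 1 * s w) = pzero" by (simp add: pzero_def fun_eq_iff)
    thus ?thesis using s(1) ideal_pzero[OF I] unfolding J_def by (auto intro!: exI[of _ 1])
  qed
  ultimately show False using s(2) by blast
qed

section \<open>Representations defined by automata on the quiver\<close>

text \<open>A partial deterministic automaton whose states are labelled by vertices lets each path move a
  state to at most one state; the resulting matrix coefficients define a representation of \<open>KQ\<close>.\<close>

fun walk :: "('s \<Rightarrow> nat) \<Rightarrow> ('s \<Rightarrow> nat \<Rightarrow> 's option) \<Rightarrow> 's \<Rightarrow> nat list \<Rightarrow> 's option" where
  "walk lab tr s [] = None"
| "walk lab tr s [v] = (if lab s = v then Some s else None)"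
| "walk lab tr s (v # w # r) =
     (if lab s = v then (case tr s w of None \<Rightarrow> None | Some s' \<Rightarrow> walk lab tr s' (w # r)) else None)"

lemma walk_SomeD: "walk lab tr s p = Some s' \<Longrightarrow> p \<noteq> [] \<and> lab s = hd p \<and> lab s' = last p"
  by (induction lab tr s p rule: walk.induct) (auto split: if_splits option.splits)

lemma walk_Cons_label_ne: "lab s \<noteq> v \<Longrightarrow> walk lab tr s (v # r) = None"
  by (cases r) auto

lemma walk_append_tl:
  assumes "composable p q"
  shows "walk lab tr s (p @ tl q) = (case walk lab tr s p of None \<Rightarrow> None | Some s' \<Rightarrow> walk lab tr s' q)"
  using assms unfolding composable_def
proof (induction p arbitrary: s)
  case Nil thus ?case by simp
next
  case (Cons v p)
  show ?case
  proof (cases p)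
    case Nil
    hence q: "q = v # tl q" using Cons.prems by (cases q) auto
    show ?thesis using Nil walk_Cons_label_ne[of lab s v tr "tl q"] by (subst q) (auto simp: q[symmetric])
  next
    case (Cons w p')
    thus ?thesis using Cons.IH Cons.prems \<open>p = w # p'\<close> by (auto split: option.splits)
  qed
qed

lemma walk_append_tl_eq_Some:
  "composable p q \<and> walk lab tr s (p @ tl q) = Some s'' \<longleftrightarrow>
     (\<exists>s'. walk lab tr s p = Some s' \<and> walk lab tr s' q = Some s'')"
proof
  assume "composable p q \<and> walk lab tr s (p @ tl q) = Some s''"
  thus "\<exists>s'. walk lab tr s p = Some s' \<and> walk lab tr s' q = Some s''"
    by (auto simp: walk_append_tl split: option.splits)
next
  assume "\<exists>s'. walk lab tr s p = Some s' \<and> walk lab tr s' q = Some s''"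
  then obtain s' where "walk lab tr s p = Some s'" "walk lab tr s' q = Some s''" by blast
  moreover from this have "composable p q" by (auto simp: composable_def dest!: walk_SomeD)
  ultimately show "composable p q \<and> walk lab tr s (p @ tl q) = Some s''"
    by (simp add: walk_append_tl)
qed

definition path_coeff ::
    "('s \<Rightarrow> nat) \<Rightarrow> ('s \<Rightarrow> nat \<Rightarrow> 's option) \<Rightarrow> (nat list \<Rightarrow> 'a::field) \<Rightarrow> 's \<Rightarrow> 's \<Rightarrow> 'a" where
  "path_coeff lab tr f s s' = (\<Sum>p | f p \<noteq> 0 \<and> walk lab tr s p = Some s'. f p)"

lemma path_coeff_eq_sum:
  assumes "finite U" "psupp f \<subseteq> U"
  shows "path_coeff lab tr f s s' = (\<Sum>p\<in>U. if walk lab tr s p = Some s' then f p else 0)"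
proof -
  have "path_coeff lab tr f s s' = (\<Sum>p\<in>{p\<in>U. walk lab tr s p = Some s'}. f p)"
    unfolding path_coeff_def using assms by (intro sum.mono_neutral_left) (auto simp: psupp_def)
  also have "\<dots> = (\<Sum>p\<in>U. if walk lab tr s p = Some s' then f p else 0)"
    by (rule sum.inter_filter[OF assms(1)])
  finally show ?thesis .
qed

lemma path_coeff_pzero: "path_coeff lab tr pzero s s' = 0"
  by (simp add: path_coeff_def pzero_def)

lemma path_coeff_pbasis: "path_coeff lab tr (pbasis w) s s' = (if walk lab tr s w = Some s' then 1 else 0)"
  by (subst path_coeff_eq_sum[of "{w}"]) (auto simp: psupp_def pbasis_def)

lemma path_coeff_padd:
  assumes "finite (psupp f)" "finite (psupp g)"
  shows "path_coeff lab tr (padd f g) s s' = path_coeff lab tr f s s' + path_coeff lab tr g s s'"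
proof -
  have U: "finite (psupp f \<union> psupp g)" using assms by simp
  show ?thesis
    using psupp_padd_subset[of f g]
    by (subst (1 2 3) path_coeff_eq_sum[OF U])
      (auto simp: padd_def sum.distrib[symmetric] intro!: sum.cong)
qed

lemma path_coeff_psmult:
  assumes "finite (psupp f)"
  shows "path_coeff lab tr (psmult c f) s s' = c * path_coeff lab tr f s s'"
  using psupp_psmult_subset[of c f]
  by (subst (1 2) path_coeff_eq_sum[OF assms]) (auto simp: psmult_def sum_distrib_left intro!: sum.cong)

lemma path_coeff_pmult_eq_pair_sum:
  assumes f: "finite (psupp f)" and g: "finite (psupp g)"
  shows "path_coeff lab tr (pmult f g) s s'' =
    (\<Sum>p\<in>psupp f. \<Sum>q\<in>psupp g.
       if composable p q \<and> walk lab tr s (p @ tl q) = Some s'' then f p * g q else 0)"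
proof -
  let ?W = "(\<lambda>(p, q). p @ tl q) ` (psupp f \<times> psupp g)"
  let ?walk = "walk lab tr"
  have finW: "finite ?W" using f g by simp
  have "path_coeff lab tr (pmult f g) s s'' =
          (\<Sum>w\<in>?W. if ?walk s w = Some s'' then pmult f g w else 0)"
    by (rule path_coeff_eq_sum[OF finW psupp_pmult_subset])
  also have "\<dots> = (\<Sum>w\<in>?W. \<Sum>p\<in>psupp f. \<Sum>q\<in>psupp g.
                     if composable p q \<and> p @ tl q = w \<and> ?walk s w = Some s'' then f p * g q else 0)"
  proof (intro sum.cong refl)
    fix w
    show "(if ?walk s w = Some s'' then pmult f g w else 0) =
      (\<Sum>p\<in>psupp f. \<Sum>q\<in>psupp g.
         if composable p q \<and> p @ tl q = w \<and> ?walk s w = Some s'' then f p * g q else 0)"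
      by (cases "?walk s w = Some s''") (simp_all add: pmult_eq_sum[OF f g order_refl order_refl])
  qed
  also have "\<dots> = (\<Sum>p\<in>psupp f. \<Sum>q\<in>psupp g. \<Sum>w\<in>?W.
                     if composable p q \<and> p @ tl q = w \<and> ?walk s w = Some s'' then f p * g q else 0)"
    by (subst sum.swap) (simp add: sum.swap[of _ ?W])
  also have "\<dots> = (\<Sum>p\<in>psupp f. \<Sum>q\<in>psupp g.
                     if composable p q \<and> ?walk s (p @ tl q) = Some s'' then f p * g q else 0)"
  proof (intro sum.cong refl)
    fix p q assume "p \<in> psupp f" "q \<in> psupp g"
    hence "p @ tl q \<in> ?W" by force
    have "(\<Sum>w\<in>?W. if composable p q \<and> p @ tl q = w \<and> ?walk s w = Some s'' then f p * g q else 0) =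
          (\<Sum>w\<in>?W. if p @ tl q = w then
             (if composable p q \<and> ?walk s (p @ tl q) = Some s'' then f p * g q else 0) else 0)"
      by (rule sum.cong) auto
    also have "\<dots> = (if composable p q \<and> ?walk s (p @ tl q) = Some s'' then f p * g q else 0)"
      using \<open>p @ tl q \<in> ?W\<close> by (simp add: sum.delta'[OF finW])
    finally show "(\<Sum>w\<in>?W. if composable p q \<and> p @ tl q = w \<and> ?walk s w = Some s'' then f p * g q else 0) =
          (if composable p q \<and> ?walk s (p @ tl q) = Some s'' then f p * g q else 0)" .
  qed
  finally show ?thesis .
qed

lemma path_coeff_pmult:
  fixes f g :: "nat list \<Rightarrow> 'a::field" and lab :: "'s \<Rightarrow> nat" and tr s
  assumes f: "finite (psupp f)" and g: "finite (psupp g)"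
  defines "S \<equiv> (\<lambda>p. the (walk lab tr s p)) ` {p\<in>psupp f. walk lab tr s p \<noteq> None}"
  shows "path_coeff lab tr (pmult f g) s s'' =
           (\<Sum>s'\<in>S. path_coeff lab tr f s s' * path_coeff lab tr g s' s'')"
proof -
  let ?walk = "walk lab tr"
  have finS: "finite S" using f by (simp add: S_def)
  have "path_coeff lab tr (pmult f g) s s'' =
    (\<Sum>p\<in>psupp f. \<Sum>q\<in>psupp g.
       if composable p q \<and> ?walk s (p @ tl q) = Some s'' then f p * g q else 0)"
    by (rule path_coeff_pmult_eq_pair_sum[OF f g])
  also have "\<dots> = (\<Sum>p\<in>psupp f. \<Sum>q\<in>psupp g. \<Sum>s'\<in>S.
                     if ?walk s p = Some s' \<and> ?walk s' q = Some s'' then f p * g q else 0)"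
  proof (intro sum.cong refl)
    fix p q assume p: "p \<in> psupp f"
    show "(if composable p q \<and> ?walk s (p @ tl q) = Some s'' then f p * g q else 0) =
          (\<Sum>s'\<in>S. if ?walk s p = Some s' \<and> ?walk s' q = Some s'' then f p * g q else 0)"
    proof (cases "?walk s p")
      case (Some s')
      hence "s' \<in> S" using p by (force simp: S_def)
      have "(\<Sum>t\<in>S. if ?walk s p = Some t \<and> ?walk t q = Some s'' then f p * g q else 0) =
            (\<Sum>t\<in>S. if s' = t then (if ?walk s' q = Some s'' then f p * g q else 0) else 0)"
        using Some by (intro sum.cong) auto
      thus ?thesis using Some finS \<open>s' \<in> S\<close> walk_append_tl_eq_Some[of p q lab tr s s'']
        by (simp add: sum.delta)
    next
      case None
      hence "\<not> (composable p q \<and> ?walk s (p @ tl q) = Some s'')"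
        using walk_append_tl_eq_Some[of p q lab tr s s''] by auto
      thus ?thesis using None by (subst if_not_P) simp_all
    qed
  qed
  also have "\<dots> = (\<Sum>p\<in>psupp f. \<Sum>t\<in>S. \<Sum>q\<in>psupp g.
      (if ?walk s p = Some t then f p else 0) * (if ?walk t q = Some s'' then g q else 0))"
    by (intro sum.cong refl, subst sum.swap) (auto intro!: sum.cong)
  also have "\<dots> = (\<Sum>t\<in>S. \<Sum>p\<in>psupp f. \<Sum>q\<in>psupp g.
      (if ?walk s p = Some t then f p else 0) * (if ?walk t q = Some s'' then g q else 0))"
    by (rule sum.swap)
  also have "\<dots> = (\<Sum>s'\<in>S. (\<Sum>p\<in>psupp f. if ?walk s p = Some s' then f p else 0) *
                            (\<Sum>q\<in>psupp g. if ?walk s' q = Some s'' then g q else 0))"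
    by (simp add: sum_product)
  also have "\<dots> = (\<Sum>s'\<in>S. path_coeff lab tr f s s' * path_coeff lab tr g s' s'')"
    by (simp add: path_coeff_eq_sum[OF f order_refl] path_coeff_eq_sum[OF g order_refl])
  finally show ?thesis .
qed

lemma path_coeff_nonzeroE:
  assumes "path_coeff lab tr f s s' \<noteq> 0"
  obtains p where "f p \<noteq> 0" "walk lab tr s p = Some s'"
  using sum.not_neutral_contains_not_neutral[OF assms[unfolded path_coeff_def]] by blast

lemma path_coeff_pmult_nonzeroE:
  assumes "finite (psupp f)" "finite (psupp g)" "path_coeff lab tr (pmult f g) s s'' \<noteq> 0"
  obtains s' where "path_coeff lab tr f s s' \<noteq> 0" "path_coeff lab tr g s' s'' \<noteq> 0"
proof (rule ccontr)
  assume "\<not> thesis"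
  hence "\<forall>s'. path_coeff lab tr f s s' * path_coeff lab tr g s' s'' = 0" using that by auto
  hence "path_coeff lab tr (pmult f g) s s'' = 0"
    unfolding path_coeff_pmult[OF assms(1,2)] by (simp add: sum.neutral)
  thus False using assms(3) by contradiction
qed

lemma path_coeff_pone_nonzero:
  assumes "path_coeff lab tr (pone n :: nat list \<Rightarrow> 'a::field) s s' \<noteq> 0"
  shows "s' = s"
proof -
  obtain p where "pone n p \<noteq> (0 :: 'a)" "walk lab tr s p = Some s'"
    using assms by (rule path_coeff_nonzeroE)
  thus ?thesis by (auto simp: pone_def split: if_splits)
qed

lemma path_coeff_ppow_relpow:
  assumes f: "finite (psupp f)" and R: "\<And>s s'. path_coeff lab tr f s s' \<noteq> 0 \<Longrightarrow> (s, s') \<in> R"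
  shows "path_coeff lab tr (ppow n f k) s s' \<noteq> 0 \<Longrightarrow> (s, s') \<in> R ^^ k"
proof (induction k arbitrary: s')
  case 0
  thus ?case using path_coeff_pone_nonzero by fastforce
next
  case (Suc k)
  have fin: "finite (psupp (ppow n f k))"
    using f by (induction k) (simp_all add: finite_psupp_pmult finite_psupp_KQ[OF KQ_pone])
  have "path_coeff lab tr (pmult (ppow n f k) f) s s' \<noteq> 0" using Suc.prems by simp
  then obtain t where "path_coeff lab tr (ppow n f k) s t \<noteq> 0" "path_coeff lab tr f t s' \<noteq> 0"
    by (rule path_coeff_pmult_nonzeroE[OF fin f])
  thus ?case by (intro relpow_Suc_I Suc.IH R)
qed

definition annihilator ::
    "nat \<Rightarrow> ('s \<Rightarrow> nat) \<Rightarrow> ('s \<Rightarrow> nat \<Rightarrow> 's option) \<Rightarrow> (nat list \<Rightarrow> 'a::field) set" where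
  "annihilator n lab tr = {f \<in> KQ n. \<forall>s s'. path_coeff lab tr f s s' = 0}"

lemma is_ideal_annihilator: "is_ideal n (annihilator n lab tr :: (nat list \<Rightarrow> 'a::field) set)"
proof -
  have mult: "path_coeff lab tr (pmult f g) s s' = 0"
    if "f \<in> KQ n" "g \<in> KQ n" "f \<in> annihilator n lab tr \<or> g \<in> annihilator n lab tr"
    for f g :: "nat list \<Rightarrow> 'a" and s s'
    using that path_coeff_pmult_nonzeroE[OF finite_psupp_KQ finite_psupp_KQ, of f n g n lab tr s s']
    unfolding annihilator_def by blast
  show ?thesis
    unfolding is_ideal_def is_left_ideal_def is_right_ideal_def is_subspace_def
    by (auto simp: annihilator_def KQ_pzero KQ_padd KQ_psmult KQ_pmult path_coeff_pzero
        path_coeff_padd path_coeff_psmult finite_psupp_KQ intro!: mult)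
qed

section \<open>The quiver \<open>Q_{\<D>_n}\<close> and the ideal \<open>I^*\<close>\<close>

lemma dn_arrow_iff:
  assumes "n \<ge> 4" "v < n"
  shows "dn_arrow n v w \<longleftrightarrow>
           (v = 0 \<and> w = 2) \<or> (v = 1 \<and> w = 2) \<or> (v = 2 \<and> (w = 0 \<or> w = 1 \<or> w = 3)) \<or>
           (v \<ge> 3 \<and> (w = v - 1 \<or> (w = v + 1 \<and> v + 1 < n)))"
  using assms unfolding dn_arrow_def dn_edge_def
  by (cases "v \<le> 2"; cases "w \<le> 2") (auto; presburger)+

lemma dn_path_arrow: "dn_arrow n a b \<Longrightarrow> dn_path n [a, b]"
  by (auto simp: dn_path_def dn_arrow_def)

lemma dn_path_cycle: "dn_arrow n a b \<Longrightarrow> dn_path n [a, b, a]"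
  by (auto simp: dn_path_def dn_arrow_def)

lemma vertex_rel_eq_pind: "vertex_rel n v = pind {[v, w, v] | w. dn_arrow n v w}"
  by (auto simp: vertex_rel_def pind_def fun_eq_iff)

lemma KQ_vertex_rel: "vertex_rel n v \<in> KQ n"
proof -
  have "{[v, w, v] | w. dn_arrow n v w} \<subseteq> (\<lambda>w. [v, w, v]) ` {..<n}"
    by (auto simp: dn_arrow_def)
  hence "finite {[v, w, v] | w. dn_arrow n v w}" by (rule finite_subset) simp
  thus ?thesis unfolding vertex_rel_eq_pind by (rule KQ_pind) (auto intro: dn_path_cycle)
qed

context
  fixes n :: nat
  assumes n: "n \<ge> 4"
begin

lemma vertex_rel_0: "vertex_rel n 0 = pbasis [0, 2, 0]"
  and vertex_rel_1: "vertex_rel n 1 = pbasis [1, 2, 1]"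
  and vertex_rel_leaf: "vertex_rel n (n - 1) = pbasis [n - 1, n - 2, n - 1]"
  unfolding vertex_rel_eq_pind pbasis_eq_pind
  by (rule arg_cong[where f = pind], use n in \<open>auto simp: dn_arrow_iff\<close>)+

lemma vertex_rel_2: "vertex_rel n 2 = padd (padd (pbasis [2, 0, 2]) (pbasis [2, 1, 2])) (pbasis [2, 3, 2])"
  using n by (auto simp: vertex_rel_def dn_arrow_iff padd_def pbasis_def fun_eq_iff)

lemma vertex_rel_arm:
  "3 \<le> k \<Longrightarrow> k + 1 < n \<Longrightarrow> vertex_rel n k = padd (pbasis [k, k - 1, k]) (pbasis [k, k + 1, k])"
  using n by (auto simp: vertex_rel_def dn_arrow_iff padd_def pbasis_def fun_eq_iff)

lemma Istar_gens_eq: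
  "Istar_gens n =
     {vertex_rel n v | v. v < n \<and> v \<noteq> 2}
   \<union> {padd (vertex_rel n 2) (ppow n (pbasis [2, 0, 2, 1, 2]) (n div 2 - 1))}
   \<union> {ppow n (pind {[2, 0, 2], [2, 1, 2]}) (n - 2)}"
proof -
  have prod: "pmult (pbasis [2, 0]) (pbasis [0, 2]) = pbasis [2, 0, 2]"
    "pmult (pbasis [2, 1]) (pbasis [1, 2]) = pbasis [2, 1, 2]"
    "pmult (pbasis [2, 0, 2]) (pbasis [2, 1, 2]) = pbasis [2, 0, 2, 1, 2]"
    by (simp_all add: pmult_pbasis composable_def)
  have sum: "padd (pbasis [2, 0, 2]) (pbasis [2, 1, 2]) = pind {[2, 0, 2], [2, 1, 2]}"
    by (simp add: padd_def pbasis_def pind_def fun_eq_iff)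
  show ?thesis unfolding Istar_gens_def prod sum ..
qed

lemma dn_arrows_at_2:
  "dn_arrow n 2 0" "dn_arrow n 0 2" "dn_arrow n 2 1" "dn_arrow n 1 2" "dn_arrow n 2 3" "dn_arrow n 3 2"
  using n by (auto simp: dn_arrow_def dn_edge_def)

lemma Istar_gens_subset_KQ: "Istar_gens n \<subseteq> KQ n"
proof -
  have "dn_path n [2, 0, 2, 1, 2]" "dn_path n [2, 0, 2]" "dn_path n [2, 1, 2]"
    using n by (auto simp: dn_path_def dn_arrow_def dn_edge_def)
  thus ?thesis unfolding Istar_gens_eq
    by (auto intro!: KQ_padd KQ_ppow KQ_pbasis KQ_pind KQ_vertex_rel)
qed

lemma is_ideal_Istar: "is_ideal n (Istar n)"
  unfolding Istar_def by (rule is_ideal_gen_ideal[OF Istar_gens_subset_KQ])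

lemma vertex_rel_in_Istar: "v < n \<Longrightarrow> v \<noteq> 2 \<Longrightarrow> vertex_rel n v \<in> Istar n"
  unfolding Istar_def by (rule gen_ideal_generator) (auto simp: Istar_gens_eq)

lemma deformed_vertex_rel_2_in_Istar:
  "padd (vertex_rel n 2) (ppow n (pbasis [2, 0, 2, 1, 2]) (n div 2 - 1)) \<in> Istar n"
  unfolding Istar_def by (rule gen_ideal_generator) (simp add: Istar_gens_eq)

lemma cycle_sum_power_in_Istar: "ppow n (pind {[2, 0, 2], [2, 1, 2]}) (n - 2) \<in> Istar n"
  unfolding Istar_def by (rule gen_ideal_generator) (simp add: Istar_gens_eq)

end

section \<open>A representation annihilated by \<open>I^*\<close> in characteristic 2\<close>

definition socle_vertex :: "nat \<Rightarrow> nat" where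
  "socle_vertex l = (if l mod 4 = 0 then 0 else if l mod 4 = 2 then 1 else 2)"

definition socle_length :: "nat \<Rightarrow> nat" where
  "socle_length n = 2 * n - 4"

text \<open>The states \<open>(l, 0)\<close>, \<open>l \<le> 2n - 4\<close>, are the positions on the cyclic word \<open>0 2 1 2 0 2 1 2 \<dots>\<close>;
  from an odd position (a visit of vertex 2) an excursion climbs the arm \<open>3, 4, \<dots>, n - 1\<close>, the
  state \<open>(l, h)\<close> sitting at vertex \<open>h + 2\<close>, and every step down the arm advances the position by 2.
  Hence the cycle \<open>2 \<rightarrow> 3 \<rightarrow> 2\<close> acts like whichever of \<open>2 \<rightarrow> 0 \<rightarrow> 2\<close>, \<open>2 \<rightarrow> 1 \<rightarrow> 2\<close> follows the
  word, and the two cycles at an arm vertex act alike: in characteristic 2 every mesh relation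
  acts as zero.\<close>

fun dn_label :: "nat \<times> nat \<Rightarrow> nat" where
  "dn_label (l, h) = (if h = 0 then socle_vertex l else h + 2)"

fun dn_step :: "nat \<Rightarrow> nat \<times> nat \<Rightarrow> nat \<Rightarrow> (nat \<times> nat) option" where
  "dn_step n (l, h) v =
    (if h = 0 then
       (if l + 1 \<le> socle_length n \<and> v = socle_vertex (l + 1) then Some (l + 1, 0)
        else if odd l \<and> v = 3 \<and> l + 3 \<le> socle_length n then Some (l, 1) else None)
     else if odd l \<and> v = h + 3 \<and> l + 2 * h + 3 \<le> socle_length n then Some (l, h + 1)
     else if odd l \<and> v = h + 1 then Some (l + 2, h - 1) else None)"

abbreviation dn_walk :: "nat \<Rightarrow> nat \<times> nat \<Rightarrow> nat list \<Rightarrow> (nat \<times> nat) option" where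
  "dn_walk n \<equiv> walk dn_label (dn_step n)"

abbreviation dn_coeff :: "nat \<Rightarrow> (nat list \<Rightarrow> 'a::field) \<Rightarrow> nat \<times> nat \<Rightarrow> nat \<times> nat \<Rightarrow> 'a" where
  "dn_coeff n \<equiv> path_coeff dn_label (dn_step n)"

lemma socle_vertex_simps:
  "socle_vertex l = 0 \<longleftrightarrow> l mod 4 = 0" "socle_vertex l = 1 \<longleftrightarrow> l mod 4 = 2"
  "socle_vertex l = 2 \<longleftrightarrow> odd l" "socle_vertex l \<noteq> 3" "socle_vertex l < 3"
  by (auto simp: socle_vertex_def) presburger+

lemma dn_label_eq_2: "dn_label (l, h) = 2 \<longleftrightarrow> h = 0 \<and> odd l"
  using socle_vertex_simps[of l] by auto

lemma dn_label_ge_3: "dn_label (l, h) = k \<Longrightarrow> k \<ge> 3 \<Longrightarrow> h = k - 2"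
  using socle_vertex_simps(5)[of l] by (auto split: if_splits)

lemma dn_walk_cycle_0: "dn_walk n s [0, 2, 0] = None"
proof (cases s)
  case (Pair l h)
  show ?thesis using Pair by (auto simp: socle_vertex_simps) presburger+
qed

lemma dn_walk_cycle_1: "dn_walk n s [1, 2, 1] = None"
proof (cases s)
  case (Pair l h)
  show ?thesis
  proof (cases "dn_label (l, h) = 1")
    case True
    hence "h = 0" "l mod 4 = 2" using socle_vertex_simps[of l] by (auto split: if_splits)
    moreover from this have "socle_vertex (l + 1) = 2" "socle_vertex (l + 2) = 0"
      by (simp_all add: socle_vertex_simps) presburger+
    ultimately show ?thesis using Pair by simp
  qed (simp add: Pair)
qed

lemma dn_walk_arm_cycle_down:
  assumes "k \<ge> 3"
  shows "dn_walk n (l, h) [k, k - 1, k] =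
    (if dn_label (l, h) = k \<and> odd l \<and> l + 2 * (k - 2) + 3 \<le> socle_length n
     then Some (l + 2, k - 2) else None)"
proof (cases "dn_label (l, h) = k")
  case True
  hence h: "h = k - 2" using dn_label_ge_3 assms by blast
  show ?thesis
  proof (cases "k = 3")
    case False
    thus ?thesis using h assms by (simp add: socle_vertex_simps)
  qed (use h in \<open>simp add: socle_vertex_simps\<close>)
qed simp

lemma dn_walk_arm_cycle_up:
  assumes "k \<ge> 3"
  shows "dn_walk n (l, h) [k, k + 1, k] =
    (if dn_label (l, h) = k \<and> odd l \<and> l + 2 * (k - 2) + 3 \<le> socle_length n
     then Some (l + 2, k - 2) else None)"
proof (cases "dn_label (l, h) = k")
  case True
  hence "h = k - 2" using dn_label_ge_3 assms by blast
  thus ?thesis using assms by auto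
qed simp

lemma dn_walk_arm_cycles_eq: "k \<ge> 3 \<Longrightarrow> dn_walk n s [k, k - 1, k] = dn_walk n s [k, k + 1, k]"
  by (cases s) (simp only: dn_walk_arm_cycle_down dn_walk_arm_cycle_up)

lemma dn_walk_leaf_cycle:
  assumes "n \<ge> 4"
  shows "dn_walk n s [n - 1, n - 2, n - 1] = None"
proof (cases s)
  case (Pair l h)
  have "n - 2 = (n - 1) - 1" by simp
  hence "dn_walk n s [n - 1, n - 2, n - 1] = dn_walk n (l, h) [n - 1, (n - 1) - 1, n - 1]"
    using Pair by simp
  also have "\<dots> = None" using assms by (subst dn_walk_arm_cycle_down) (auto simp: socle_length_def)
  finally show ?thesis .
qed

lemma dn_walk_cycle_2_0:
  "dn_walk n (l, h) [2, 0, 2] =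
    (if h = 0 \<and> l mod 4 = 3 \<and> l + 2 \<le> socle_length n then Some (l + 2, 0) else None)"
proof (cases "h = 0 \<and> odd l")
  case True
  have "socle_vertex (l + 1) = 0 \<longleftrightarrow> l mod 4 = 3" unfolding socle_vertex_simps by presburger
  moreover have "socle_vertex (l + 2) = 2" using True unfolding socle_vertex_simps by simp
  ultimately show ?thesis using True by (auto simp: socle_vertex_simps)
next
  case False
  hence "dn_label (l, h) \<noteq> 2" "\<not> (h = 0 \<and> l mod 4 = 3)" using dn_label_eq_2 by presburger+
  thus ?thesis by (auto simp del: dn_label.simps)
qed

lemma dn_walk_cycle_2_1:
  "dn_walk n (l, h) [2, 1, 2] =
    (if h = 0 \<and> l mod 4 = 1 \<and> l + 2 \<le> socle_length n then Some (l + 2, 0) else None)"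
proof (cases "h = 0 \<and> odd l")
  case True
  have "socle_vertex (l + 1) = (if l mod 4 = 1 then 1 else 0)"
    using True unfolding socle_vertex_def by presburger
  moreover have "socle_vertex (l + 2) = 2" "socle_vertex l = 2"
    using True unfolding socle_vertex_simps by simp_all
  ultimately show ?thesis using True by auto
next
  case False
  hence "dn_label (l, h) \<noteq> 2" "\<not> (h = 0 \<and> l mod 4 = 1)" using dn_label_eq_2 by presburger+
  thus ?thesis by (auto simp del: dn_label.simps)
qed

lemma dn_walk_cycle_2_3:
  "dn_walk n (l, h) [2, 3, 2] =
    (if h = 0 \<and> odd l \<and> l + 3 \<le> socle_length n then Some (l + 2, 0) else None)"
proof (cases "h = 0 \<and> odd l")
  case True
  have "socle_vertex (l + 2) = 2" using True unfolding socle_vertex_simps by simp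
  thus ?thesis using True by (auto simp: socle_vertex_simps)
next
  case False
  hence "dn_label (l, h) \<noteq> 2" using dn_label_eq_2 by blast
  thus ?thesis using False by (auto simp del: dn_label.simps)
qed

text \<open>Since \<open>4\<close> divides \<open>2n - 4\<close>, the bounds \<open>l + 2 \<le> 2n - 4\<close> and \<open>l + 3 \<le> 2n - 4\<close> agree at odd \<open>l\<close>.\<close>

lemma dn_walk_cycles_at_2:
  assumes "socle_length n mod 4 = 0"
  shows "(dn_walk n s [2, 0, 2] = dn_walk n s [2, 3, 2] \<and> dn_walk n s [2, 1, 2] = None) \<or>
         (dn_walk n s [2, 1, 2] = dn_walk n s [2, 3, 2] \<and> dn_walk n s [2, 0, 2] = None)"
proof (cases s)
  case (Pair l h)
  show ?thesis
  proof (cases "h = 0 \<and> odd l")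
    case True
    hence "l mod 4 = 1 \<or> l mod 4 = 3" by presburger
    moreover have "l + 2 \<le> socle_length n \<longleftrightarrow> l + 3 \<le> socle_length n" using True assms by presburger
    ultimately show ?thesis
      unfolding Pair dn_walk_cycle_2_0 dn_walk_cycle_2_1 dn_walk_cycle_2_3 using True by auto
  next
    case False
    hence "\<not> (h = 0 \<and> l mod 4 = 3)" "\<not> (h = 0 \<and> l mod 4 = 1)" by presburger+
    thus ?thesis
      unfolding Pair dn_walk_cycle_2_0 dn_walk_cycle_2_1 dn_walk_cycle_2_3 using False by auto
  qed
qed

lemma dn_walk_cycle_2_level:
  assumes "c = 0 \<or> c = 1" "dn_walk n s [2, c, 2] = Some s'"
  shows "fst s' = fst s + 2 \<and> odd (fst s') \<and> fst s' \<le> socle_length n"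
  using assms
  by (cases s) (auto simp: dn_walk_cycle_2_0 dn_walk_cycle_2_1 socle_vertex_simps split: if_splits)

lemma dn_walk_double_cycle_2_level:
  assumes "dn_walk n s [2, 0, 2, 1, 2] = Some s'"
  shows "fst s' = fst s + 4 \<and> odd (fst s') \<and> fst s' \<le> socle_length n"
proof -
  have "composable [2, 0, 2] [2, 1, 2]" by (simp add: composable_def)
  moreover have "dn_walk n s ([2, 0, 2] @ tl [2, 1, 2]) = Some s'" using assms by (simp del: walk.simps)
  ultimately have "composable [2, 0, 2] [2, 1, 2] \<and> dn_walk n s ([2, 0, 2] @ tl [2, 1, 2]) = Some s'" ..
  then obtain t where "dn_walk n s [2, 0, 2] = Some t" "dn_walk n t [2, 1, 2] = Some s'"
    unfolding walk_append_tl_eq_Some by blast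
  hence "fst t = fst s + 2" "fst s' = fst t + 2 \<and> odd (fst s') \<and> fst s' \<le> socle_length n"
    using dn_walk_cycle_2_level[of 0 n s t] dn_walk_cycle_2_level[of 1 n t s'] by auto
  thus ?thesis by auto
qed

lemma relpow_level_shift:
  assumes "R \<subseteq> {(s, s'). g s' = g s + d \<and> P s'}"
  shows "(s, s') \<in> R ^^ Suc k \<Longrightarrow> g s' = g s + Suc k * d \<and> P s'"
proof (induction k arbitrary: s')
  case 0
  thus ?case using assms by auto
next
  case (Suc k)
  from Suc.prems obtain t where t: "(s, t) \<in> R ^^ Suc k" "(t, s') \<in> R" by (rule relpow_Suc_E)
  have "g t = g s + Suc k * d" using Suc.IH[OF t(1)] by simp
  moreover have "g s' = g t + d \<and> P s'" using assms t(2) by blast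
  ultimately show ?case by simp
qed

text \<open>A product of \<open>k\<close> factors each advancing the position by \<open>d\<close> to an odd position would have to
  run from position 0 to the even position \<open>k d = 2n - 4\<close>.\<close>

lemma dn_coeff_ppow_vanishes:
  assumes f: "finite (psupp f)" and k: "k \<ge> 1" "k * d = socle_length n"
    and shift: "\<And>s s'. dn_coeff n f s s' \<noteq> 0 \<Longrightarrow>
                  fst s' = fst s + d \<and> odd (fst s') \<and> fst s' \<le> socle_length n"
  shows "dn_coeff n (ppow n f k) s s' = 0"
proof (rule ccontr)
  let ?R = "{(s, s'). dn_coeff n f s s' \<noteq> 0}"
  assume nonzero: "dn_coeff n (ppow n f k) s s' \<noteq> 0"
  have "(s, s') \<in> ?R ^^ k" by (rule path_coeff_ppow_relpow[OF f _ nonzero]) simp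
  moreover obtain j where j: "k = Suc j" using k(1) by (cases k) auto
  ultimately have "(s, s') \<in> ?R ^^ Suc j" by (simp only:)
  moreover have "?R \<subseteq> {(s, s'). fst s' = fst s + d \<and> odd (fst s') \<and> fst s' \<le> socle_length n}"
    using shift by blast
  ultimately have "fst s' = fst s + k * d \<and> odd (fst s') \<and> fst s' \<le> socle_length n"
    unfolding j by (intro relpow_level_shift[where P = "\<lambda>s. odd (fst s) \<and> fst s \<le> socle_length n"])
  thus False using k(2) by (auto simp: socle_length_def)
qed

lemma CHAR_2_two_eq_zero: "CHAR('a::field) = 2 \<Longrightarrow> (2 :: 'a) = 0"
  by (metis of_nat_CHAR of_nat_numeral)

context
  fixes n :: nat
  assumes n: "n \<ge> 4"
begin

lemma dn_coeff_vertex_rel_vanishes: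
  assumes "v < n" "v \<noteq> 2" "CHAR('a::field) = 2"
  shows "dn_coeff n (vertex_rel n v :: nat list \<Rightarrow> 'a) s s' = 0"
proof -
  have pair: "dn_coeff n (padd (pbasis p) (pbasis q) :: nat list \<Rightarrow> 'a) s s' = 0"
    if "dn_walk n s p = dn_walk n s q" for p q
    using that CHAR_2_two_eq_zero[OF assms(3)]
    by (simp add: path_coeff_padd finite_psupp_pbasis path_coeff_pbasis)
  consider "v = 0" | "v = 1" | "v = n - 1" | "3 \<le> v" "v + 1 < n" using assms(1,2) by linarith
  thus ?thesis
  proof cases
    case 1
    thus ?thesis by (simp add: vertex_rel_0[OF n] path_coeff_pbasis dn_walk_cycle_0 del: walk.simps)
  next
    case 2
    thus ?thesis using dn_walk_cycle_1[of n s]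
      by (simp add: vertex_rel_1[OF n, simplified] path_coeff_pbasis del: walk.simps)
  next
    case 3
    thus ?thesis using dn_walk_leaf_cycle[OF n, of s]
      by (simp add: vertex_rel_leaf[OF n, simplified] path_coeff_pbasis del: walk.simps)
  next
    case 4
    thus ?thesis unfolding vertex_rel_arm[OF n 4] by (intro pair dn_walk_arm_cycles_eq)
  qed
qed

lemma dn_coeff_vertex_rel_2_vanishes:
  assumes "even n" "CHAR('a::field) = 2"
  shows "dn_coeff n (vertex_rel n 2 :: nat list \<Rightarrow> 'a) s s' = 0"
proof -
  have "socle_length n mod 4 = 0" using assms(1) n by (auto simp: socle_length_def elim!: evenE)
  have pb: "dn_coeff n (pbasis p :: nat list \<Rightarrow> 'a) s s' = (if dn_walk n s p = Some s' then 1 else 0)"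
    for p by (rule path_coeff_pbasis)
  have "dn_coeff n (vertex_rel n 2 :: nat list \<Rightarrow> 'a) s s' =
    dn_coeff n (pbasis [2, 0, 2] :: nat list \<Rightarrow> 'a) s s' + dn_coeff n (pbasis [2, 1, 2] :: nat list \<Rightarrow> 'a) s s'
      + dn_coeff n (pbasis [2, 3, 2] :: nat list \<Rightarrow> 'a) s s'"
    unfolding vertex_rel_2[OF n]
    by (simp add: path_coeff_padd finite_psupp_padd finite_psupp_pbasis del: walk.simps)
  also have "\<dots> = 0"
    using dn_walk_cycles_at_2[OF \<open>socle_length n mod 4 = 0\<close>, of s] CHAR_2_two_eq_zero[OF assms(2)]
    unfolding pb by (elim disjE) (simp_all del: walk.simps)
  finally show ?thesis .
qed

lemma deformed_vertex_rel_2_in_annihilator: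
  assumes "even n" "CHAR('a::field) = 2"
  shows "(padd (vertex_rel n 2) (ppow n (pbasis [2, 0, 2, 1, 2]) (n div 2 - 1)) :: nat list \<Rightarrow> 'a)
           \<in> annihilator n dn_label (dn_step n)"
proof -
  let ?D = "pbasis [2, 0, 2, 1, 2] :: nat list \<Rightarrow> 'a"
  let ?g = "padd (vertex_rel n 2) (ppow n ?D (n div 2 - 1))"
  have power: "dn_coeff n (ppow n ?D (n div 2 - 1)) s s' = 0" for s s'
  proof (rule dn_coeff_ppow_vanishes[OF finite_psupp_pbasis])
    show "n div 2 - 1 \<ge> 1" "(n div 2 - 1) * 4 = socle_length n"
      using assms(1) n by (auto simp: socle_length_def elim!: evenE)
    fix s s' assume "dn_coeff n ?D s s' \<noteq> 0"
    hence "dn_walk n s [2, 0, 2, 1, 2] = Some s'"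
      by (simp add: path_coeff_pbasis split: if_splits del: walk.simps)
    thus "fst s' = fst s + 4 \<and> odd (fst s') \<and> fst s' \<le> socle_length n"
      by (rule dn_walk_double_cycle_2_level)
  qed
  have "?g \<in> KQ n" using deformed_vertex_rel_2_in_Istar[OF n] ideal_subset_KQ[OF is_ideal_Istar[OF n]] by blast
  moreover have "finite (psupp (ppow n ?D k))" for k
    using n by (intro finite_psupp_KQ[of _ n] KQ_ppow KQ_pbasis)
      (auto simp: dn_path_def dn_arrow_def dn_edge_def)
  hence "dn_coeff n ?g s s' = 0" for s s'
    by (simp add: path_coeff_padd finite_psupp_KQ[OF KQ_vertex_rel] power[simplified]
        dn_coeff_vertex_rel_2_vanishes[OF assms])
  ultimately show ?thesis by (simp add: annihilator_def)
qed

lemma cycle_sum_power_in_annihilator: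
  "(ppow n (pind {[2, 0, 2], [2, 1, 2]}) (n - 2) :: nat list \<Rightarrow> 'a::field)
     \<in> annihilator n dn_label (dn_step n)"
proof -
  let ?X = "pind {[2, 0, 2], [2, 1, 2]} :: nat list \<Rightarrow> 'a"
  have "dn_coeff n (ppow n ?X (n - 2)) s s' = 0" for s s'
  proof (rule dn_coeff_ppow_vanishes)
    show "finite (psupp ?X)" by (rule finite_subset[of _ "{[2, 0, 2], [2, 1, 2]}"]) (auto simp: psupp_def pind_def)
    show "n - 2 \<ge> 1" "(n - 2) * 2 = socle_length n" using n by (auto simp: socle_length_def)
    fix s s' assume "dn_coeff n ?X s s' \<noteq> 0"
    then obtain p where "p = [2, 0, 2] \<or> p = [2, 1, 2]" "dn_walk n s p = Some s'"
      by (auto simp: pind_def split: if_splits elim!: path_coeff_nonzeroE)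
    thus "fst s' = fst s + 2 \<and> odd (fst s') \<and> fst s' \<le> socle_length n"
      using dn_walk_cycle_2_level[of 0] dn_walk_cycle_2_level[of 1] by blast
  qed
  moreover have "?X \<in> KQ n"
    using n by (intro KQ_pind) (auto simp: dn_path_def dn_arrow_def dn_edge_def)
  ultimately show ?thesis by (simp add: annihilator_def KQ_ppow)
qed

lemma Istar_subset_annihilator:
  assumes "even n" "CHAR('a::field) = 2"
  shows "(Istar n :: (nat list \<Rightarrow> 'a) set) \<subseteq> annihilator n dn_label (dn_step n)"
  unfolding Istar_def
proof (rule gen_ideal_least[OF is_ideal_annihilator])
  have "(vertex_rel n v :: nat list \<Rightarrow> 'a) \<in> annihilator n dn_label (dn_step n)" if "v < n" "v \<noteq> 2" for v
    by (simp add: annihilator_def KQ_vertex_rel dn_coeff_vertex_rel_vanishes[OF that assms(2)])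
  thus "(Istar_gens n :: (nat list \<Rightarrow> 'a) set) \<subseteq> annihilator n dn_label (dn_step n)"
    unfolding Istar_gens_eq[OF n]
    using deformed_vertex_rel_2_in_annihilator[OF assms] cycle_sum_power_in_annihilator by blast
qed

end

section \<open>The socle path\<close>

definition socle_path :: "nat \<Rightarrow> nat list" where
  "socle_path n = map socle_vertex [0..<socle_length n + 1]"

lemma socle_vertex_socle_length:
  assumes "n \<ge> 4" "even n"
  shows "socle_vertex (socle_length n) = 0" "socle_vertex (socle_length n + 1) = 2"
    "socle_vertex (socle_length n + 2) = 1" "socle_vertex (socle_length n + 3) = 2"
proof -
  have "socle_length n mod 4 = 0" using assms by (auto simp: socle_length_def elim!: evenE)
  thus "socle_vertex (socle_length n) = 0" "socle_vertex (socle_length n + 1) = 2"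
    "socle_vertex (socle_length n + 2) = 1" "socle_vertex (socle_length n + 3) = 2"
    unfolding socle_vertex_def by presburger+
qed

lemma upt_eq_append_upt: "i \<le> j \<Longrightarrow> j \<le> k \<Longrightarrow> [i..<k] = [i..<j] @ [j..<k]"
  using upt_add_eq_append[of i j "k - j"] by simp

lemma socle_vertex_arrow: "n \<ge> 4 \<Longrightarrow> dn_arrow n (socle_vertex i) (socle_vertex (Suc i))"
proof -
  assume n: "n \<ge> 4"
  have "i mod 4 = 0 \<or> i mod 4 = 1 \<or> i mod 4 = 2 \<or> i mod 4 = 3" by presburger
  moreover have "Suc i mod 4 = (if i mod 4 = 3 then 0 else Suc (i mod 4))" by presburger
  ultimately show ?thesis using n by (auto simp: socle_vertex_def dn_arrow_def dn_edge_def)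
qed

lemma dn_path_socle_vertices:
  assumes "n \<ge> 4" "a < b"
  shows "dn_path n (map socle_vertex [a..<b])"
proof -
  have "socle_vertex v < n" for v using socle_vertex_simps(5)[of v] assms(1) by linarith
  moreover have "successively (dn_arrow n) (map socle_vertex [a..<b])"
    unfolding successively_map successively_conv_nth using socle_vertex_arrow[OF assms(1)] by simp
  ultimately show ?thesis using assms(2) by (simp add: dn_path_def)
qed

lemma dn_walk_socle_prefix:
  "k \<le> socle_length n \<Longrightarrow> dn_walk n (0, 0) (map socle_vertex [0..<k + 1]) = Some (k, 0)"
proof (induction k)
  case 0 thus ?case by (simp add: socle_vertex_def)
next
  case (Suc k)
  have "map socle_vertex [0..<Suc k + 1] = map socle_vertex [0..<k + 1] @ tl [socle_vertex k, socle_vertex (Suc k)]"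
    by simp
  moreover have "composable (map socle_vertex [0..<k + 1]) [socle_vertex k, socle_vertex (Suc k)]"
    by (simp add: composable_def last_map del: upt_Suc)
  ultimately have "dn_walk n (0, 0) (map socle_vertex [0..<Suc k + 1]) =
      (case dn_walk n (0, 0) (map socle_vertex [0..<k + 1]) of None \<Rightarrow> None
       | Some s \<Rightarrow> dn_walk n s [socle_vertex k, socle_vertex (Suc k)])"
    by (simp only: walk_append_tl)
  also have "\<dots> = Some (Suc k, 0)" using Suc by simp
  finally show ?case .
qed

lemma socle_path_notin_Istar:
  assumes "n \<ge> 4" "even n" "CHAR('a::field) = 2"
  shows "(pbasis (socle_path n) :: nat list \<Rightarrow> 'a) \<notin> Istar n"
proof
  assume "pbasis (socle_path n) \<in> (Istar n :: (nat list \<Rightarrow> 'a) set)"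
  hence "(pbasis (socle_path n) :: nat list \<Rightarrow> 'a) \<in> annihilator n dn_label (dn_step n)"
    using Istar_subset_annihilator[OF assms] by blast
  hence "dn_coeff n (pbasis (socle_path n) :: nat list \<Rightarrow> 'a) (0, 0) (socle_length n, 0) = 0"
    unfolding annihilator_def by blast
  moreover have "dn_walk n (0, 0) (socle_path n) = Some (socle_length n, 0)"
    unfolding socle_path_def by (rule dn_walk_socle_prefix) simp
  ultimately show False by (simp add: path_coeff_pbasis del: walk.simps)
qed

text \<open>Expanding the generator \<open>(2 0 2 + 2 1 2)^{n-2}\<close> of \<open>I^*\<close> and multiplying by the arrow \<open>0 2\<close> on
  the left gives the sum of all paths \<open>0 2 c\<^sub>1 2 c\<^sub>2 \<dots> 2 c\<^sub>n\<^sub>-\<^sub>2 2\<close> with \<open>c\<^sub>i \<in> {0, 1}\<close>. Each of them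
  except the alternating one contains a cycle \<open>v 2 v\<close> with \<open>v \<in> {0, 1}\<close>, a relation of \<open>I^*\<close>; the
  alternating one is the socle path followed by the arrow \<open>0 2\<close>.\<close>

definition via2 :: "nat list \<Rightarrow> nat list" where
  "via2 cs = concat (map (\<lambda>c. [c, 2]) cs)"

definition alternating :: "nat \<Rightarrow> nat \<Rightarrow> nat list" where
  "alternating c k = map (\<lambda>i. if even i then c else 1 - c) [0..<k]"

definition cycle_words :: "nat \<Rightarrow> nat list set" where
  "cycle_words k = {2 # via2 cs | cs. length cs = k \<and> set cs \<subseteq> {0, 1}}"

lemma via2_simps [simp]:
  "via2 [] = []" "via2 (c # cs) = c # 2 # via2 cs" "via2 (cs @ ds) = via2 cs @ via2 ds"
  by (simp_all add: via2_def)

lemma last_via2: "last (c # 2 # via2 cs) = 2"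
  by (induction cs arbitrary: c) auto

lemma alternating_Suc: "c \<le> 1 \<Longrightarrow> alternating c (Suc k) = c # alternating (1 - c) k"
  unfolding alternating_def by (auto simp: map_upt_Suc simp del: upt_Suc intro!: map_cong)

lemma alternating_snoc: "alternating c (Suc k) = alternating c k @ [if even k then c else 1 - c]"
  unfolding alternating_def by simp

lemma socle_vertices_eq_via2: "map socle_vertex [0..<2 * k + 2] = 0 # 2 # via2 (alternating 1 k)"
proof (induction k)
  case 0 thus ?case by (simp add: socle_vertex_def alternating_def upt_rec)
next
  case (Suc k)
  have e: "[0..<2 * Suc k + 2] = [0..<2 * k + 2] @ [2 * k + 2, 2 * k + 3]"
    by (simp add: upt_rec[of "2 * k + 2"] upt_rec[of "2 * k + 3"] upt_add_eq_append[symmetric])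
  have "socle_vertex (2 * k + 2) = (if even k then 1 else 0)" "socle_vertex (2 * k + 3) = 2"
    unfolding socle_vertex_def by presburger+
  thus ?case unfolding e using Suc by (simp add: alternating_snoc)
qed

lemma finite_cycle_words: "finite (cycle_words k)"
proof -
  have "cycle_words k = (\<lambda>cs. 2 # via2 cs) ` {cs. set cs \<subseteq> {0, 1} \<and> length cs = k}"
    unfolding cycle_words_def by auto
  thus ?thesis using finite_lists_length_eq[of "{0 :: nat, 1}" k] by simp
qed

lemma cycle_words_1: "cycle_words 1 = {[2, 0, 2], [2, 1, 2]}"
proof (intro set_eqI iffI)
  fix w assume "w \<in> cycle_words 1"
  then obtain c where "w = 2 # via2 [c]" "c \<in> {0, 1}"
    unfolding cycle_words_def by (auto simp: length_Suc_conv)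
  thus "w \<in> {[2, 0, 2], [2, 1, 2]}" by auto
next
  fix w :: "nat list" assume "w \<in> {[2, 0, 2], [2, 1, 2]}"
  then obtain c where "c = 0 \<or> c = 1" "w = 2 # via2 [c]" by auto
  thus "w \<in> cycle_words 1" unfolding cycle_words_def by (intro CollectI exI[of _ "[c]"]) auto
qed

lemma cycle_words_Suc:
  "cycle_words (Suc k) =
     (\<lambda>(p, q). p @ tl q) ` {(p, q). p \<in> cycle_words k \<and> q \<in> {[2, 0, 2], [2, 1, 2]} \<and> last p = hd q}"
proof (intro set_eqI iffI)
  fix w assume "w \<in> cycle_words (Suc k)"
  then obtain cs where cs: "w = 2 # via2 cs" "length cs = Suc k" "set cs \<subseteq> {0, 1}"
    unfolding cycle_words_def by blast
  then obtain ds c where ds: "cs = ds @ [c]" by (metis length_Suc_conv_rev)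
  have "last (2 # via2 ds) = 2" using last_via2 by (cases ds) auto
  moreover have "w = (2 # via2 ds) @ tl [2, c, 2]" "2 # via2 ds \<in> cycle_words k" "c = 0 \<or> c = 1"
    using cs ds unfolding cycle_words_def by auto
  ultimately show "w \<in> (\<lambda>(p, q). p @ tl q) `
      {(p, q). p \<in> cycle_words k \<and> q \<in> {[2, 0, 2], [2, 1, 2]} \<and> last p = hd q}"
    by (auto intro!: image_eqI[of _ _ "(2 # via2 ds, [2, c, 2])"])
next
  fix w assume "w \<in> (\<lambda>(p, q). p @ tl q) `
      {(p, q). p \<in> cycle_words k \<and> q \<in> {[2, 0, 2], [2, 1, 2]} \<and> last p = hd q}"
  then obtain cs c where "w = 2 # via2 (cs @ [c])" "length cs = k" "set cs \<subseteq> {0, 1}" "c = 0 \<or> c = 1"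
    unfolding cycle_words_def by auto
  thus "w \<in> cycle_words (Suc k)" unfolding cycle_words_def by (auto intro!: exI[of _ "cs @ [c]"])
qed

lemma ppow_cycle_words:
  assumes "n \<ge> 4" "k \<ge> 1"
  shows "ppow n (pind {[2, 0, 2], [2, 1, 2]} :: nat list \<Rightarrow> 'a::field) k = pind (cycle_words k)"
  using assms(2)
proof (induction k rule: dec_induct)
  case base
  show ?case using assms(1) by (simp add: pmult_pone_left cycle_words_1[simplified])
next
  case (step k)
  have "inj_on (\<lambda>(p, q). p @ tl q) {(p, q). p \<in> cycle_words k \<and> q \<in> {[2, 0, 2], [2, 1, 2]} \<and> last p = hd q}"
  proof (rule inj_onI, clarify)
    fix p q p' q' assume "p @ tl q = p' @ tl q'" "q \<in> {[2, 0, 2], [2, 1, 2]}" "q' \<in> {[2, 0, 2], [2, 1, 2]}"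
    thus "p = p' \<and> q = q'" by auto
  qed
  moreover have "\<forall>p\<in>cycle_words k. p \<noteq> []" unfolding cycle_words_def by auto
  ultimately have "pmult (pind (cycle_words k)) (pind {[2, 0, 2], [2, 1, 2]}) =
      (pind (cycle_words (Suc k)) :: nat list \<Rightarrow> 'a)"
    unfolding cycle_words_Suc by (intro pmult_pind) auto
  thus ?case using step.IH by simp
qed

lemma repeat_or_alternating:
  "c\<^sub>0 \<le> 1 \<Longrightarrow> set cs \<subseteq> {0, 1} \<Longrightarrow>
    (\<exists>u v r. c\<^sub>0 # 2 # via2 cs = u @ [v, 2, v] @ r \<and> v \<le> 1) \<or> cs = alternating (1 - c\<^sub>0) (length cs)"
proof (induction cs arbitrary: c\<^sub>0)
  case Nil thus ?case by (simp add: alternating_def)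
next
  case (Cons c cs)
  show ?case
  proof (cases "c = c\<^sub>0")
    case True
    hence "c\<^sub>0 # 2 # via2 (c # cs) = [] @ [c\<^sub>0, 2, c\<^sub>0] @ (2 # via2 cs)" by simp
    thus ?thesis using Cons.prems by blast
  next
    case False
    hence c: "c = 1 - c\<^sub>0" "c \<le> 1" "set cs \<subseteq> {0, 1}" using Cons.prems by auto
    from Cons.IH[OF c(2,3)] show ?thesis
    proof (elim disjE exE conjE)
      fix u v r assume "c # 2 # via2 cs = u @ [v, 2, v] @ r" "v \<le> 1"
      hence "c\<^sub>0 # 2 # via2 (c # cs) = (c\<^sub>0 # 2 # u) @ [v, 2, v] @ r \<and> v \<le> 1" by simp
      thus ?thesis by blast
    next
      assume "cs = alternating (1 - c) (length cs)"
      hence "c # cs = alternating (1 - c\<^sub>0) (length (c # cs))" using c by (simp add: alternating_Suc)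
      thus ?thesis by blast
    qed
  qed
qed

lemma dn_path_via2:
  "n \<ge> 4 \<Longrightarrow> c\<^sub>0 \<le> 1 \<Longrightarrow> set cs \<subseteq> {0, 1} \<Longrightarrow> dn_path n (c\<^sub>0 # 2 # via2 cs)"
proof (induction cs arbitrary: c\<^sub>0)
  case Nil thus ?case by (auto simp: dn_path_def dn_arrow_def dn_edge_def)
next
  case (Cons c cs)
  have "dn_path n (c # 2 # via2 cs)" using Cons by auto
  moreover have "dn_arrow n c\<^sub>0 2" "dn_arrow n 2 c\<^sub>0" "c\<^sub>0 < n" "dn_arrow n 2 c"
    using Cons.prems by (auto simp: dn_arrow_def dn_edge_def)
  ultimately show ?case by (auto simp: dn_path_def)
qed

lemma pbasis_repeat_in_Istar:
  assumes n: "n \<ge> 4" and v: "v \<le> 1" and p: "dn_path n (u @ [v, 2, v] @ r)"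
  shows "(pbasis (u @ [v, 2, v] @ r) :: nat list \<Rightarrow> 'a::field) \<in> Istar n"
proof -
  have I: "is_ideal n (Istar n :: (nat list \<Rightarrow> 'a) set)" by (rule is_ideal_Istar[OF n])
  have paths: "dn_path n (u @ [v])" "dn_path n (v # r)"
    using dn_path_appendD(1)[of n "u @ [v]" "[2, v] @ r"] dn_path_appendD(2)[of n "u @ [v, 2]" "v # r"] p
    by simp_all
  have cycle: "(pbasis [v, 2, v] :: nat list \<Rightarrow> 'a) \<in> Istar n"
  proof -
    have "v = 0 \<or> v = 1" using v by auto
    hence "(vertex_rel n v :: nat list \<Rightarrow> 'a) = pbasis [v, 2, v]"
      using vertex_rel_0[OF n] vertex_rel_1[OF n] by auto
    moreover have "(vertex_rel n v :: nat list \<Rightarrow> 'a) \<in> Istar n"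
      using v n by (intro vertex_rel_in_Istar[OF n]) auto
    ultimately show ?thesis by simp
  qed
  have "pbasis (u @ [v, 2, v] @ r) =
      (pmult (pmult (pbasis (u @ [v])) (pbasis [v, 2, v])) (pbasis (v # r)) :: nat list \<Rightarrow> 'a)"
    by (simp add: pmult_pbasis composable_def)
  also have "\<dots> \<in> Istar n"
    by (intro ideal_pmult_right[OF I] ideal_pmult_left[OF I] KQ_pbasis paths cycle)
  finally show ?thesis .
qed

lemma socle_path_append_arrow_in_Istar:
  assumes n: "n \<ge> 4"
  shows "(pbasis (socle_path n @ [2]) :: nat list \<Rightarrow> 'a::field) \<in> Istar n"
proof -
  let ?S = "(Cons 0) ` cycle_words (n - 2)"
  let ?t = "0 # 2 # via2 (alternating 1 (n - 2))"
  have I: "is_ideal n (Istar n :: (nat list \<Rightarrow> 'a) set)" by (rule is_ideal_Istar[OF n])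
  have t: "socle_path n @ [2] = ?t"
  proof -
    have "odd (socle_length n + 1)" unfolding socle_length_def by presburger
    hence "socle_vertex (socle_length n + 1) = 2" by (simp add: socle_vertex_simps)
    hence "socle_path n @ [2] = map socle_vertex [0..<socle_length n + 2]"
      by (simp add: socle_path_def)
    moreover have "socle_length n + 2 = 2 * (n - 2) + 2" using n by (simp add: socle_length_def)
    ultimately show ?thesis by (simp only: socle_vertices_eq_via2)
  qed
  have "ppow n (pind {[2, 0, 2], [2, 1, 2]}) (n - 2) = (pind (cycle_words (n - 2)) :: nat list \<Rightarrow> 'a)"
    using n by (intro ppow_cycle_words) auto
  hence "pind (cycle_words (n - 2)) \<in> (Istar n :: (nat list \<Rightarrow> 'a) set)"
    using cycle_sum_power_in_Istar[OF n, where 'a = 'a] by simp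
  hence "pmult (pbasis [0, 2]) (pind (cycle_words (n - 2))) \<in> (Istar n :: (nat list \<Rightarrow> 'a) set)"
    using n by (intro ideal_pmult_left[OF I] KQ_pbasis) (auto simp: dn_path_def dn_arrow_def dn_edge_def)
  moreover have "pmult (pbasis [0, 2]) (pind (cycle_words (n - 2))) = (pind ?S :: nat list \<Rightarrow> 'a)"
    by (rule pmult_pbasis_pind_Cons) (auto simp: cycle_words_def)
  moreover have "pbasis b \<in> (Istar n :: (nat list \<Rightarrow> 'a) set)" if "b \<in> ?S - {?t}" for b
  proof -
    from that obtain cs where cs: "b = 0 # 2 # via2 cs" "length cs = n - 2" "set cs \<subseteq> {0, 1}"
      "cs \<noteq> alternating 1 (n - 2)"
      unfolding cycle_words_def by auto
    then obtain u v r where "b = u @ [v, 2, v] @ r" "v \<le> 1"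
      using repeat_or_alternating[of 0 cs] by auto
    thus ?thesis using pbasis_repeat_in_Istar[OF n] dn_path_via2[OF n _ cs(3), of 0] cs(1) by simp
  qed
  hence "pind (?S - {?t}) \<in> (Istar n :: (nat list \<Rightarrow> 'a) set)"
    by (intro ideal_pind[OF I]) (simp_all add: finite_cycle_words)
  moreover have "?t \<in> ?S"
    unfolding cycle_words_def
    by (intro imageI CollectI exI[of _ "alternating 1 (n - 2)"]) (auto simp: alternating_def)
  hence "(pbasis ?t :: nat list \<Rightarrow> 'a) = padd (pind ?S) (psmult (-1) (pind (?S - {?t})))"
    by (auto simp: padd_def psmult_def pind_def pbasis_def fun_eq_iff)
  ultimately show ?thesis unfolding t by (simp add: ideal_padd[OF I] ideal_psmult[OF I])
qed

lemma pmult_pbasis_left_eq_sum: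
  fixes a :: "nat list \<Rightarrow> 'a::field"
  assumes W: "W \<noteq> []" and a: "finite (psupp a)"
  defines "Q \<equiv> {q \<in> psupp a. q \<noteq> [last W] \<and> q \<noteq> [] \<and> hd q = last W}"
  shows "pmult (pbasis W) a w = a [last W] * pbasis W w + (\<Sum>q\<in>Q. a q * pbasis (W @ tl q) w)"
proof -
  let ?V = "psupp a \<union> {[last W]}"
  let ?T = "\<lambda>q. if composable W q \<and> W @ tl q = w then a q else 0"
  have V: "finite ?V" using a by simp
  have "pmult (pbasis W) a w =
      (\<Sum>p\<in>{W}. \<Sum>q\<in>?V. if composable p q \<and> p @ tl q = w then pbasis W p * a q else 0)"
    by (rule pmult_eq_sum) (use V in \<open>auto simp: psupp_def pbasis_def\<close>)
  also have "\<dots> = (\<Sum>q\<in>?V. if composable W q \<and> W @ tl q = w then pbasis W W * a q else 0)"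
    by simp
  also have "\<dots> = (\<Sum>q\<in>?V. ?T q)" by (rule sum.cong) (simp_all add: pbasis_def)
  also have "\<dots> = ?T [last W] + (\<Sum>q\<in>?V - {[last W]}. ?T q)" using V by (subst sum.remove) auto
  also have "?T [last W] = a [last W] * pbasis W w" using W by (auto simp: composable_def pbasis_def)
  also have "(\<Sum>q\<in>?V - {[last W]}. ?T q) = (\<Sum>q\<in>Q. ?T q)"
    using V by (intro sum.mono_neutral_right) (auto simp: Q_def composable_def psupp_def)
  also have "\<dots> = (\<Sum>q\<in>Q. a q * pbasis (W @ tl q) w)"
    using W by (intro sum.cong) (auto simp: Q_def composable_def pbasis_def)
  finally show ?thesis .
qed

text \<open>Only the arrow \<open>0 2\<close> leaves the end point 0 of the socle path, and the socle path followed by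
  it lies in \<open>I^*\<close>.\<close>

lemma socle_path_pmult_right:
  assumes n: "n \<ge> 4" and "even n" and a: "(a :: nat list \<Rightarrow> 'a::field) \<in> KQ n"
  shows "(\<lambda>w. pmult (pbasis (socle_path n)) a w - a [0] * pbasis (socle_path n) w) \<in> Istar n"
proof -
  let ?W = "socle_path n"
  let ?Q = "{q \<in> psupp a. q \<noteq> [0] \<and> q \<noteq> [] \<and> hd q = 0}"
  have I: "is_ideal n (Istar n :: (nat list \<Rightarrow> 'a) set)" by (rule is_ideal_Istar[OF n])
  have "socle_vertex (socle_length n) = 0" by (rule socle_vertex_socle_length[OF n assms(2)])
  hence last: "last ?W = 0" by (simp add: socle_path_def last_map del: upt_Suc)
  have "(pbasis (?W @ tl q) :: nat list \<Rightarrow> 'a) \<in> Istar n" if q: "q \<in> ?Q" for q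
  proof -
    from q a have "dn_path n q" by (auto simp: KQ_iff)
    moreover obtain q' where q': "q = 0 # q'" "q' \<noteq> []" using q by (cases q) auto
    ultimately have "dn_path n q'" "hd q' = 2"
      using dn_path_appendD(2)[of n "[0]" q'] n
      by (auto simp: dn_path_def dn_arrow_iff neq_Nil_conv)
    moreover have "pbasis (?W @ tl q) = (pmult (pbasis (?W @ [2])) (pbasis q') :: nat list \<Rightarrow> 'a)"
      using q' \<open>hd q' = 2\<close> by (cases q') (simp_all add: pmult_pbasis composable_def)
    ultimately show ?thesis
      by (metis ideal_pmult_right[OF I] KQ_pbasis socle_path_append_arrow_in_Istar[OF n])
  qed
  hence "(\<lambda>w. \<Sum>q\<in>?Q. a q * pbasis (?W @ tl q) w) \<in> Istar n"
    using a by (intro ideal_sum[OF I]) (auto simp: finite_psupp_KQ)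
  moreover have "?W \<noteq> []" by (simp add: socle_path_def)
  ultimately show ?thesis
    using pmult_pbasis_left_eq_sum[of ?W a] last a by (simp add: finite_psupp_KQ)
qed

section \<open>Trace forms vanish on the socle path\<close>

lemma trace_form_rotate:
  assumes \<psi>: "trace_form n I \<psi>" and "dn_path n p" "dn_path n q" "last p = hd q" "last q = hd p"
  shows "\<psi> (pbasis (p @ tl q)) = \<psi> (pbasis (q @ tl p))"
proof -
  have "composable p q" "composable q p" using assms(2-5) by (auto simp: composable_def dn_path_def)
  moreover have "\<psi> (pmult (pbasis p) (pbasis q)) = \<psi> (pmult (pbasis q) (pbasis p))"
    using assms(2,3) by (intro trace_formD(4)[OF \<psi>] KQ_pbasis)
  ultimately show ?thesis by (simp add: pmult_pbasis)
qed

lemma ppow_double_cycle_2: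
  assumes "n \<ge> 4" "k \<ge> 1"
  shows "ppow n (pbasis [2, 0, 2, 1, 2] :: nat list \<Rightarrow> 'a::field) k = pbasis (map socle_vertex [3..<4 * k + 4])"
  using assms(2)
proof (induction k rule: dec_induct)
  case base
  have "[3..<8] = [3, 4, 5, 6, 7]" by (simp add: upt_rec)
  hence "map socle_vertex [3..<4 * 1 + 4] = [2, 0, 2, 1, 2]" by (simp add: socle_vertex_def)
  moreover have "pmult (pone n) (pbasis [2, 0, 2, 1, 2]) = (pbasis [2, 0, 2, 1, 2] :: nat list \<Rightarrow> 'a)"
    unfolding pbasis_eq_pind using assms(1) by (subst pmult_pone_left) auto
  ultimately show ?case by simp
next
  case (step k)
  have e: "[3..<4 * Suc k + 4] = [3..<4 * k + 4] @ [4 * k + 4, 4 * k + 5, 4 * k + 6, 4 * k + 7]"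
  proof -
    have "[3..<4 * k + 4 + 4] = [3..<4 * k + 4] @ [4 * k + 4..<4 * k + 4 + 4]" by (rule upt_add_eq_append) simp
    moreover have "[4 * k + 4..<4 * k + 4 + 4] = [4 * k + 4, 4 * k + 5, 4 * k + 6, 4 * k + 7]" by (simp add: upt_rec)
    ultimately show ?thesis by simp
  qed
  have v: "socle_vertex (4 * k + 4) = 0" "socle_vertex (4 * k + 5) = 2" "socle_vertex (4 * k + 6) = 1"
    "socle_vertex (4 * k + 7) = 2" "socle_vertex (4 * k + 3) = 2"
    by (simp_all add: socle_vertex_def)
  have "composable (map socle_vertex [3..<4 * k + 4]) [2, 0, 2, 1, 2]"
    using v(5) by (simp add: composable_def last_map add.commute del: upt_Suc)
  hence "ppow n (pbasis [2, 0, 2, 1, 2] :: nat list \<Rightarrow> 'a) (Suc k) =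
      pbasis (map socle_vertex [3..<4 * k + 4] @ [0, 2, 1, 2])"
    using step.IH by (simp add: pmult_pbasis del: upt_Suc)
  also have "map socle_vertex [3..<4 * k + 4] @ [0, 2, 1, 2] = map socle_vertex [3..<4 * Suc k + 4]"
    unfolding e using v by simp
  finally show ?case .
qed

context
  fixes n :: nat and \<psi> :: "(nat list \<Rightarrow> 'a::field) \<Rightarrow> 'a"
  assumes n: "n \<ge> 4" and \<psi>: "trace_form n (Istar n) \<psi>"
begin

lemma trace_form_Istar_padd:
  assumes "a \<in> KQ n" "b \<in> KQ n" "padd a b \<in> Istar n" "\<psi> a = 0"
  shows "\<psi> b = 0"
  using trace_formD(3)[OF \<psi> assms(3)] trace_formD(1)[OF \<psi> assms(1,2)] assms(4) by simp

text \<open>Descending the arm: \<open>\<psi>(k (k-1) k) = -\<psi>(k (k+1) k) = -\<psi>((k+1) k (k+1))\<close>, by the mesh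
  relation at \<open>k\<close> and a rotation.\<close>

lemma trace_form_arm_cycle:
  assumes "3 \<le> k" "k \<le> n - 1"
  shows "\<psi> (pbasis [k, k - 1, k]) = 0"
  using assms(2)
proof (induction rule: inc_induct)
  case base
  have "(vertex_rel n (n - 1) :: nat list \<Rightarrow> 'a) \<in> Istar n"
    by (rule vertex_rel_in_Istar[OF n]) (use n in auto)
  moreover have "(vertex_rel n (n - 1) :: nat list \<Rightarrow> 'a) = pbasis [n - 1, n - 2, n - 1]"
    by (rule vertex_rel_leaf[OF n])
  ultimately show ?case using trace_formD(3)[OF \<psi>] by (simp add: numeral_2_eq_2)
next
  case (step m)
  have m: "3 \<le> m" "m + 1 < n" using step.hyps assms(1) by auto
  have "2 \<le> m - 1" "m - 1 \<le> n - 2" "m = m - 1 + 1" "2 \<le> m" "m \<le> n - 2" using m by linarith+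
  hence "dn_edge n m (m + 1)" "dn_edge n (m - 1) m" unfolding dn_edge_def by blast+
  hence ar: "dn_arrow n m (m + 1)" "dn_arrow n (m + 1) m" "dn_arrow n m (m - 1)"
    using m by (simp_all add: dn_arrow_def)
  have "\<psi> (pbasis ([m, m + 1] @ tl [m + 1, m])) = \<psi> (pbasis ([m + 1, m] @ tl [m, m + 1]))"
    using ar by (intro trace_form_rotate[OF \<psi>] dn_path_arrow) auto
  hence zero: "\<psi> (pbasis [m, m + 1, m]) = 0" using step.IH by simp
  have "(vertex_rel n m :: nat list \<Rightarrow> 'a) = padd (pbasis [m, m - 1, m]) (pbasis [m, m + 1, m])"
    by (rule vertex_rel_arm[OF n m])
  hence mem: "padd (pbasis [m, m + 1, m]) (pbasis [m, m - 1, m]) \<in> (Istar n :: (nat list \<Rightarrow> 'a) set)"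
    using vertex_rel_in_Istar[OF n, of m, where 'a = 'a] m by (simp add: padd_commute)
  show ?case
    by (rule trace_form_Istar_padd[OF KQ_pbasis KQ_pbasis mem zero]) (use ar in \<open>auto intro: dn_path_cycle\<close>)
qed

lemma trace_form_cycle_at_2: "c = 0 \<or> c = 1 \<or> c = 3 \<Longrightarrow> \<psi> (pbasis [2, c, 2]) = 0"
proof -
  assume c: "c = 0 \<or> c = 1 \<or> c = 3"
  hence "dn_arrow n 2 c" "dn_arrow n c 2" using dn_arrows_at_2[OF n] by auto
  hence "\<psi> (pbasis ([2, c] @ tl [c, 2])) = \<psi> (pbasis ([c, 2] @ tl [2, c]))"
    by (intro trace_form_rotate[OF \<psi>] dn_path_arrow) auto
  moreover have "\<psi> (pbasis [c, 2, c]) = 0"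
  proof -
    have "c = 3 \<Longrightarrow> \<psi> (pbasis [c, 2, c]) = 0" using trace_form_arm_cycle[of 3] n by simp
    moreover have "c = 0 \<or> c = 1 \<Longrightarrow> pbasis [c, 2, c] \<in> (Istar n :: (nat list \<Rightarrow> 'a) set)"
    proof -
      assume "c = 0 \<or> c = 1"
      moreover have "(vertex_rel n 0 :: nat list \<Rightarrow> 'a) = pbasis [0, 2, 0]"
        "(vertex_rel n 1 :: nat list \<Rightarrow> 'a) = pbasis [1, 2, 1]"
        by (rule vertex_rel_0[OF n], rule vertex_rel_1[OF n])
      ultimately show ?thesis using vertex_rel_in_Istar[OF n, of c, where 'a = 'a] n by auto
    qed
    ultimately show ?thesis using c trace_formD(3)[OF \<psi>] by blast
  qed
  ultimately show ?thesis by simp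
qed

lemma trace_form_vertex_rel_2: "\<psi> (vertex_rel n 2) = 0"
proof -
  have "dn_path n [2, c, 2]" if "c = 0 \<or> c = 1 \<or> c = 3" for c
    using that dn_arrows_at_2[OF n] by (auto intro: dn_path_cycle)
  thus ?thesis unfolding vertex_rel_2[OF n]
    using trace_form_cycle_at_2 by (simp add: trace_formD(1)[OF \<psi>] KQ_padd KQ_pbasis)
qed

lemma trace_form_double_cycle_power:
  assumes "even n"
  shows "\<psi> (pbasis (map socle_vertex [3..<socle_length n + 4])) = 0"
proof -
  have k: "n div 2 - 1 \<ge> 1" "4 * (n div 2 - 1) + 4 = socle_length n + 4"
    using assms n by (auto simp: socle_length_def elim!: evenE)
  have "ppow n (pbasis [2, 0, 2, 1, 2]) (n div 2 - 1) =
      (pbasis (map socle_vertex [3..<socle_length n + 4]) :: nat list \<Rightarrow> 'a)"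
    using ppow_double_cycle_2[OF n k(1)] k(2) by (simp only:)
  hence gen: "padd (vertex_rel n 2) (pbasis (map socle_vertex [3..<socle_length n + 4]))
      \<in> (Istar n :: (nat list \<Rightarrow> 'a) set)"
    using deformed_vertex_rel_2_in_Istar[OF n, where 'a = 'a] by (simp only:)
  show ?thesis
    by (rule trace_form_Istar_padd[OF KQ_vertex_rel KQ_pbasis gen trace_form_vertex_rel_2])
      (rule dn_path_socle_vertices[OF n], simp)
qed

text \<open>Two rotations turn the socle path into the power \<open>(2 0 2 1 2)^{n/2-1}\<close>, which the second
  generator of \<open>I^*\<close> ties to the mesh relation at vertex 2.\<close>

lemma trace_form_socle_path_rotated:
  assumes "even n"
  shows "\<psi> (pbasis (map socle_vertex [1..<socle_length n + 2])) = 0"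
proof -
  define N where "N = socle_length n"
  have N: "N \<ge> 4" using n by (simp add: N_def socle_length_def)
  note v = socle_vertex_socle_length[OF n assms, folded N_def]
  have "map socle_vertex [1..<N + 2] = [2, 1, 2] @ tl (map socle_vertex [3..<N + 2])"
  proof -
    have "[1..<N + 2] = [1..<3] @ [3..<N + 2]" using N upt_eq_append_upt[of 1 3 "N + 2"] by simp
    moreover have "[1..<3] = [1, 2]" by (simp add: upt_rec)
    moreover have "map socle_vertex [3..<N + 2] = 2 # tl (map socle_vertex [3..<N + 2])"
      using N by (simp add: upt_conv_Cons socle_vertex_def)
    ultimately show ?thesis by (simp add: socle_vertex_def)
  qed
  also have "\<psi> (pbasis \<dots>) = \<psi> (pbasis (map socle_vertex [3..<N + 2] @ tl [2, 1, 2]))"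
  proof (rule trace_form_rotate[OF \<psi>])
    show "dn_path n [2, 1, 2]" using dn_arrows_at_2[OF n] by (intro dn_path_cycle)
    show "dn_path n (map socle_vertex [3..<N + 2])" using N by (intro dn_path_socle_vertices[OF n]) simp
    show "last [2, 1, 2] = hd (map socle_vertex [3..<N + 2])" using N by (simp add: hd_map socle_vertex_def)
    show "last (map socle_vertex [3..<N + 2]) = hd [2, 1, 2]" using N v by (simp add: last_map del: upt_Suc)
  qed
  also have "map socle_vertex [3..<N + 2] @ tl [2, 1, 2] = map socle_vertex [3..<N + 4]"
  proof -
    have "[3..<N + 4] = [3..<N + 2] @ [N + 2..<N + 4]" using N upt_eq_append_upt[of 3 "N + 2" "N + 4"] by simp
    moreover have "[N + 2..<N + 4] = [N + 2, N + 3]" by (simp add: upt_rec)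
    ultimately show ?thesis using v by (simp del: upt_Suc)
  qed
  finally show ?thesis using trace_form_double_cycle_power[OF assms] by (simp add: N_def)
qed

lemma trace_form_socle_path:
  assumes "even n"
  shows "\<psi> (pbasis (socle_path n)) = 0"
proof -
  define N where "N = socle_length n"
  have N: "N \<ge> 4" using n by (simp add: N_def socle_length_def)
  note v = socle_vertex_socle_length[OF n assms, folded N_def]
  have "socle_path n = [0, 2] @ tl (map socle_vertex [1..<N + 1])"
  proof -
    have "[0..<N + 1] = [0..<1] @ [1..<N + 1]" using N upt_eq_append_upt[of 0 1 "N + 1"] by simp
    moreover have "map socle_vertex [1..<N + 1] = 2 # tl (map socle_vertex [1..<N + 1])"
      using N by (simp add: upt_conv_Cons socle_vertex_def)
    ultimately show ?thesis by (simp add: socle_path_def N_def[symmetric] socle_vertex_def)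
  qed
  also have "\<psi> (pbasis \<dots>) = \<psi> (pbasis (map socle_vertex [1..<N + 1] @ tl [0, 2]))"
  proof (rule trace_form_rotate[OF \<psi>])
    show "dn_path n [0, 2]" using dn_arrows_at_2[OF n] by (intro dn_path_arrow)
    show "dn_path n (map socle_vertex [1..<N + 1])" using N by (intro dn_path_socle_vertices[OF n]) simp
    show "last [0, 2] = hd (map socle_vertex [1..<N + 1])" using N by (simp add: hd_map socle_vertex_def)
    show "last (map socle_vertex [1..<N + 1]) = hd [0, 2]" using N v by (simp add: last_map del: upt_Suc)
  qed
  also have "map socle_vertex [1..<N + 1] @ tl [0, 2] = map socle_vertex [1..<N + 2]"
    using v by simp
  finally show ?thesis using trace_form_socle_path_rotated[OF assms] by (simp add: N_def)
qed

end

theorem mainTheorem16: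
  fixes n :: nat
  assumes "n \<ge> 4" and "even n" and "CHAR('a::alg_closed_field) = 2"
  shows "\<not> symmetric_quotient n (Istar n :: (nat list \<Rightarrow> 'a) set)"
proof (rule not_symmetric_quotientI[where s = "pbasis (socle_path n)"])
  show "is_ideal n (Istar n :: (nat list \<Rightarrow> 'a) set)" by (rule is_ideal_Istar[OF assms(1)])
  show "pbasis (socle_path n) \<in> KQ n"
    unfolding socle_path_def by (intro KQ_pbasis dn_path_socle_vertices assms(1)) simp
  show "pbasis (socle_path n) \<notin> (Istar n :: (nat list \<Rightarrow> 'a) set)"
    by (rule socle_path_notin_Istar[OF assms])
  show "\<exists>c. (\<lambda>w. pmult (pbasis (socle_path n)) a w - c * pbasis (socle_path n) w) \<in> Istar n"
    if "a \<in> KQ n" for a :: "nat list \<Rightarrow> 'a"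
    using socle_path_pmult_right[OF assms(1,2) that] by blast
  show "\<psi> (pbasis (socle_path n)) = 0" if "trace_form n (Istar n) \<psi>" for \<psi>
    by (rule trace_form_socle_path[OF assms(1) that assms(2)])
qed

end
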